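(* Let $T,T'$ be tiling classes, $\mathcal N$ an approximating sub-almost-groupoid of $\mathcal M_{II}$, and $\hat\varphi:\mathcal N\to\mathcal M'_{II}$ a map which preserves composability, commutes with the inverse map, and satisfies (1) $\hat\varphi(c)\hat\varphi(c')\preceq\hat\varphi(cc')$ for all composable $c,c'\in\mathcal N$, and (2) there is $t>0$ such that $|\mathrm{rad}(\hat\varphi(u))-t\,\mathrm{rad}(u)|$ is a bounded function on the units. Then $\varphi[\lim u_\nu,c]_{\mathcal N}:=[\lim\hat\varphi(u_\nu),\hat\varphi(c)]$ is well defined and defines a (continuous) groupoid homomorphism $\varphi:\mathcal R_{\mathcal N}\to\mathcal R'$.
   Context: Tilings (finite local complexity): a $d$-dimensional tiling is a countable family of bounded closed subsets of $\mathbb R^d$ (tiles, closures of interiors, finitely many decorations) covering $\mathbb R^d$, overlapping only at boundaries, up to translation; finitely many classes of pairs of touching tiles. $\mathcal M_{II}$ ($\mathcal M'_{II}$ for $T'$): doubly pointed pattern classes $M_{xy}$; $M_{x_1x_2}\preceq N_{y_1y_2}$ if $N$ contains a translate of $M$ with $x_i$ on $y_i$; $c\vdash c'$ if some $L_{z_1z_2}$ and tile $z$ of $L$ satisfy $c\preceq L_{z_1z}$, $c'\preceq L_{zz_2}$, with $cc'$ the minimal such $L_{z_1z_2}$; $(M_{xy})^{-1}=M_{yx}$; units $M_{xx}$; $L(c)=cc^{-1}$, $R(c)=c^{-1}c$; $\mathrm{rad}(u)$ the largest $r$ such that $u$ covers all $r$-balls centred in its pointed tile. A sub-almost-groupoid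 is a subset closed under inverses and products of composable elements. Hull $\Omega$: completion of pointed tilings $T_x$ under $d(\omega,\omega')=e^{-\sup\{r:M_r(\omega)=M_r(\omega')\}}$ ($M_r(\omega)$ the smallest pointed pattern around the pointed tile covering all $r$-balls centred in it). An approximating sequence is a sequence of units $u_\nu$ with $u_1\cdots u_k\vdash u_{k+1}$ for all $k$ and $\mathrm{rad}(u_\nu)\to\infty$; $\lim u_\nu$ is the pointed tiling containing all $u_\nu$ at its pointed tile. $u\preceq\omega$ if $u$ occurs at $\omega$'s pointed tile; $U_u=\{\omega:u\preceq\omega\}$; $\omega\cdot c$ the pointed tiling with pointer moved along $c$ ($L(c)\preceq\omega$). $\Omega_{\mathcal N}=\bigcup_{c\in\mathcal N}U_{R(c)}$; $\mathcal N$ approximating: every $\omega\in\Omega_{\mathcal N}$ is the limit of an approximating sequence in $\mathcal N$. $\mathcal R'$: classes $[\omega,c]$ ($L(c)\preceq\omega$) where $(\omega,c)\sim(\omega,c')$ iff some unit $u\preceq\omega$ has $uc=uc'$, product $[\omega,c][\omega\cdot c,c']=[\omega,cc']$, inverse $[\omega\cdot c,c^{-1}]$, topology generated by $\{[\omega,c]:L(c)\preceq\omega\}$. $\mathcal R_{\mathcal N}$: the classes $[\omega,c]_{\mathcal N}$ with $\omega\in\Omega_{\mathcal N}$, $c\in\mathcal N$, $L(c)\preceq\omega$ under the same equivalence restricted to $c\in\mathcal N$, with the analogous groupoid structure and quotient topology. *)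

theory Defs
  imports "HOL-Analysis.Analysis" "HOL-Library.Extended_Real"
begin

text \<open>A tile is a subset of R^d (d = CARD('n)) together with a decoration label.\<close>
type_synonym ('n,'l) tile = "(real^'n) set \<times> 'l"
text \<open>Doubly pointed pattern (M, x, y) with x, y tiles of M.\<close>
type_synonym ('n,'l) dpat = "('n,'l) tile set \<times> ('n,'l) tile \<times> ('n,'l) tile"
text \<open>Pointed tiling / pointed pattern (S, p) with p a tile of S.\<close>
type_synonym ('n,'l) ptil = "('n,'l) tile set \<times> ('n,'l) tile"

definition tile_tr :: "real^'n::finite \<Rightarrow> ('n,'l) tile \<Rightarrow> ('n,'l) tile" where
  "tile_tr a t = ((\<lambda>x. a + x) ` fst t, snd t)"

definition pat_tr :: "real^'n::finite \<Rightarrow> ('n,'l) tile set \<Rightarrow> ('n,'l) tile set" where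
  "pat_tr a P = tile_tr a ` P"

definition is_tiling :: "('n::finite,'l) tile set \<Rightarrow> bool" where
  "is_tiling T \<longleftrightarrow>
     countable T \<and>
     (\<forall>t\<in>T. bounded (fst t) \<and> closed (fst t) \<and> fst t \<noteq> {} \<and> closure (interior (fst t)) = fst t) \<and>
     \<Union>(fst ` T) = UNIV \<and>
     (\<forall>t\<in>T. \<forall>t'\<in>T. t \<noteq> t' \<longrightarrow> interior (fst t) \<inter> interior (fst t') = {}) \<and>
     (\<exists>F. finite F \<and> (\<forall>t\<in>T. \<forall>t'\<in>T. t \<noteq> t' \<and> fst t \<inter> fst t' \<noteq> {} \<longrightarrow>
             (\<exists>(s,s')\<in>F. \<exists>a. t = tile_tr a s \<and> t' = tile_tr a s')))"

definition dp_tr :: "real^'n::finite \<Rightarrow> ('n,'l) dpat \<Rightarrow> ('n,'l) dpat" where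
  "dp_tr a p = (case p of (M,x,y) \<Rightarrow> (pat_tr a M, tile_tr a x, tile_tr a y))"

definition dpclass :: "('n::finite,'l) dpat \<Rightarrow> ('n,'l) dpat set" where
  "dpclass p = range (\<lambda>a. dp_tr a p)"

definition is_pattern :: "('n::finite,'l) tile set \<Rightarrow> ('n,'l) tile set \<Rightarrow> bool" where
  "is_pattern T M \<longleftrightarrow> finite M \<and> M \<noteq> {} \<and> M \<subseteq> T"

definition MII :: "('n::finite,'l) tile set \<Rightarrow> ('n,'l) dpat set set" where
  "MII T = {dpclass (M,x,y) | M x y. is_pattern T M \<and> x \<in> M \<and> y \<in> M}"

definition dle :: "('n::finite,'l) dpat set \<Rightarrow> ('n,'l) dpat set \<Rightarrow> bool" where
  "dle c c' \<longleftrightarrow> (\<exists>M N x y. (M,x,y) \<in> c \<and> (N,x,y) \<in> c' \<and> M \<subseteq> N)"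

definition dinv :: "('n::finite,'l) dpat set \<Rightarrow> ('n,'l) dpat set" where
  "dinv c = (\<lambda>(M,x,y). (M,y,x)) ` c"

definition glue_cands :: "('n::finite,'l) tile set \<Rightarrow> ('n,'l) dpat set \<Rightarrow> ('n,'l) dpat set \<Rightarrow> ('n,'l) dpat set set" where
  "glue_cands T c c' = {dpclass (L,z1,z2) | L z1 z2 z. is_pattern T L \<and> z1 \<in> L \<and> z2 \<in> L \<and> z \<in> L \<and>
       dle c (dpclass (L,z1,z)) \<and> dle c' (dpclass (L,z,z2))}"

definition composable :: "('n::finite,'l) tile set \<Rightarrow> ('n,'l) dpat set \<Rightarrow> ('n,'l) dpat set \<Rightarrow> bool" where
  "composable T c c' \<longleftrightarrow> glue_cands T c c' \<noteq> {}"

definition dmult :: "('n::finite,'l) tile set \<Rightarrow> ('n,'l) dpat set \<Rightarrow> ('n,'l) dpat set \<Rightarrow> ('n,'l) dpat set" where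
  "dmult T c c' = (THE m. m \<in> glue_cands T c c' \<and> (\<forall>m'\<in>glue_cands T c c'. dle m m'))"

definition Lu :: "('n::finite,'l) tile set \<Rightarrow> ('n,'l) dpat set \<Rightarrow> ('n,'l) dpat set" where
  "Lu T c = dmult T c (dinv c)"

definition Ru :: "('n::finite,'l) tile set \<Rightarrow> ('n,'l) dpat set \<Rightarrow> ('n,'l) dpat set" where
  "Ru T c = dmult T (dinv c) c"

definition is_unit :: "('n::finite,'l) tile set \<Rightarrow> ('n,'l) dpat set \<Rightarrow> bool" where
  "is_unit T u \<longleftrightarrow> u \<in> MII T \<and> (\<exists>M x. u = dpclass (M,x,x))"

definition rad :: "('n::finite,'l) dpat set \<Rightarrow> real" where
  "rad u = Sup {r. 0 \<le> r \<and> (\<forall>(M,x,y)\<in>u. \<forall>p\<in>fst x. ball p r \<subseteq> \<Union>(fst ` M))}"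

definition sub_almost_groupoid :: "('n::finite,'l) tile set \<Rightarrow> ('n,'l) dpat set set \<Rightarrow> bool" where
  "sub_almost_groupoid T N \<longleftrightarrow> N \<subseteq> MII T \<and> (\<forall>c\<in>N. dinv c \<in> N) \<and>
     (\<forall>c\<in>N. \<forall>c'\<in>N. composable T c c' \<longrightarrow> dmult T c c' \<in> N)"

definition ptclass :: "('n::finite,'l) ptil \<Rightarrow> ('n,'l) ptil set" where
  "ptclass sp = range (\<lambda>a. (pat_tr a (fst sp), tile_tr a (snd sp)))"

definition is_ptclass :: "('n::finite,'l) ptil set \<Rightarrow> bool" where
  "is_ptclass \<omega> \<longleftrightarrow> (\<exists>S p. is_tiling S \<and> p \<in> S \<and> \<omega> = ptclass (S,p))"

definition Mr_rep :: "real \<Rightarrow> ('n::finite,'l) tile set \<Rightarrow> ('n,'l) tile \<Rightarrow> ('n,'l) tile set" where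
  "Mr_rep r S p = (THE P. P \<subseteq> S \<and> p \<in> P \<and> (\<forall>q\<in>fst p. ball q r \<subseteq> \<Union>(fst ` P)) \<and>
      (\<forall>P'. P' \<subseteq> S \<and> p \<in> P' \<and> (\<forall>q\<in>fst p. ball q r \<subseteq> \<Union>(fst ` P')) \<longrightarrow> P \<subseteq> P'))"

definition Mr :: "real \<Rightarrow> ('n::finite,'l) ptil set \<Rightarrow> ('n,'l) ptil set" where
  "Mr r \<omega> = (let sp = (SOME sp. sp \<in> \<omega>) in ptclass (Mr_rep r (fst sp) (snd sp), snd sp))"

text \<open>Hull: closure of the pointed tilings T_x (the completion) in the space of pointed tilings.\<close>
definition Omega :: "('n::finite,'l) tile set \<Rightarrow> ('n,'l) ptil set set" where
  "Omega T = {\<omega>. is_ptclass \<omega> \<and> (\<forall>r\<ge>0. \<exists>x\<in>T. Mr r \<omega> = Mr r (ptclass (T,x)))}"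

definition hdist :: "('n::finite,'l) ptil set \<Rightarrow> ('n,'l) ptil set \<Rightarrow> ereal" where
  "hdist \<omega> \<omega>' = (let A = {r. 0 \<le> r \<and> Mr r \<omega> = Mr r \<omega>'} in
      if A = {} then \<infinity> else if bdd_above A then ereal (exp (- Sup A)) else 0)"

definition Omega_open :: "('n::finite,'l) tile set \<Rightarrow> ('n,'l) ptil set set \<Rightarrow> bool" where
  "Omega_open T S \<longleftrightarrow> S \<subseteq> Omega T \<and>
     (\<forall>\<omega>\<in>S. \<exists>\<epsilon>>0. \<forall>\<omega>'\<in>Omega T. hdist \<omega> \<omega>' < ereal \<epsilon> \<longrightarrow> \<omega>' \<in> S)"

definition occ :: "('n::finite,'l) dpat set \<Rightarrow> ('n,'l) ptil set \<Rightarrow> bool" where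
  "occ u \<omega> \<longleftrightarrow> (\<exists>M x S. (M,x,x) \<in> u \<and> (S,x) \<in> \<omega> \<and> M \<subseteq> S)"

definition UU :: "('n::finite,'l) tile set \<Rightarrow> ('n,'l) dpat set \<Rightarrow> ('n,'l) ptil set set" where
  "UU T u = {\<omega> \<in> Omega T. occ u \<omega>}"

definition OmegaN :: "('n::finite,'l) tile set \<Rightarrow> ('n,'l) dpat set set \<Rightarrow> ('n,'l) ptil set set" where
  "OmegaN T N = (\<Union>c\<in>N. UU T (Ru T c))"

definition act :: "('n::finite,'l) ptil set \<Rightarrow> ('n,'l) dpat set \<Rightarrow> ('n,'l) ptil set" where
  "act \<omega> c = (THE \<omega>'. \<exists>S M x y. (S,x) \<in> \<omega> \<and> (M,x,y) \<in> c \<and> M \<subseteq> S \<and> \<omega>' = ptclass (S,y))"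

primrec iprod :: "('n::finite,'l) tile set \<Rightarrow> (nat \<Rightarrow> ('n,'l) dpat set) \<Rightarrow> nat \<Rightarrow> ('n,'l) dpat set" where
  "iprod T u 0 = u 0"
| "iprod T u (Suc k) = dmult T (iprod T u k) (u (Suc k))"

text \<open>Approximating sequence of units taken from the set A (indexing starts at 0).\<close>
definition approx_seq :: "('n::finite,'l) tile set \<Rightarrow> ('n,'l) dpat set set \<Rightarrow> (nat \<Rightarrow> ('n,'l) dpat set) \<Rightarrow> bool" where
  "approx_seq T A u \<longleftrightarrow> (\<forall>\<nu>. u \<nu> \<in> A \<and> is_unit T (u \<nu>)) \<and>
     (\<forall>k. composable T (iprod T u k) (u (Suc k))) \<and>
     filterlim (\<lambda>\<nu>. rad (u \<nu>)) at_top sequentially"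

definition slim :: "(nat \<Rightarrow> ('n::finite,'l) dpat set) \<Rightarrow> ('n,'l) ptil set" where
  "slim u = (THE \<omega>. is_ptclass \<omega> \<and> (\<forall>\<nu>. occ (u \<nu>) \<omega>))"

definition approximating :: "('n::finite,'l) tile set \<Rightarrow> ('n,'l) dpat set set \<Rightarrow> bool" where
  "approximating T N \<longleftrightarrow> (\<forall>\<omega>\<in>OmegaN T N. \<exists>u. approx_seq T N u \<and> slim u = \<omega>)"

section \<open>The groupoids R' (A = MII T, B = Omega T) and R_N (A = N, B = OmegaN T N)\<close>

definition requiv :: "('n::finite,'l) tile set \<Rightarrow> ('n,'l) ptil set \<Rightarrow> ('n,'l) dpat set \<Rightarrow> ('n,'l) dpat set \<Rightarrow> bool" where
  "requiv T \<omega> c c' \<longleftrightarrow> (\<exists>u. is_unit T u \<and> occ u \<omega> \<and> composable T u c \<and> composable T u c' \<and>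
       dmult T u c = dmult T u c')"

definition Rdom :: "('n::finite,'l) tile set \<Rightarrow> ('n,'l) dpat set set \<Rightarrow> ('n,'l) ptil set set
    \<Rightarrow> (('n,'l) ptil set \<times> ('n,'l) dpat set) set" where
  "Rdom T A B = {(\<omega>,c). \<omega> \<in> B \<and> c \<in> A \<and> occ (Lu T c) \<omega>}"

definition rcls :: "('n::finite,'l) tile set \<Rightarrow> ('n,'l) dpat set set \<Rightarrow> ('n,'l) ptil set \<Rightarrow> ('n,'l) dpat set
    \<Rightarrow> (('n,'l) ptil set \<times> ('n,'l) dpat set) set" where
  "rcls T A \<omega> c = {(\<omega>,c') | c'. c' \<in> A \<and> occ (Lu T c') \<omega> \<and> requiv T \<omega> c c'}"

definition Rset :: "('n::finite,'l) tile set \<Rightarrow> ('n,'l) dpat set set \<Rightarrow> ('n,'l) ptil set set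
    \<Rightarrow> (('n,'l) ptil set \<times> ('n,'l) dpat set) set set" where
  "Rset T A B = (\<lambda>(\<omega>,c). rcls T A \<omega> c) ` Rdom T A B"

definition rcomp :: "('n::finite,'l) tile set \<Rightarrow> ('n,'l) dpat set set \<Rightarrow> ('n,'l) ptil set set
    \<Rightarrow> (('n,'l) ptil set \<times> ('n,'l) dpat set) set \<Rightarrow> (('n,'l) ptil set \<times> ('n,'l) dpat set) set \<Rightarrow> bool" where
  "rcomp T A B g h \<longleftrightarrow> (\<exists>\<omega> c c'. (\<omega>,c) \<in> Rdom T A B \<and> (act \<omega> c, c') \<in> Rdom T A B \<and>
       composable T c c' \<and> g = rcls T A \<omega> c \<and> h = rcls T A (act \<omega> c) c')"

definition rmult :: "('n::finite,'l) tile set \<Rightarrow> ('n,'l) dpat set set \<Rightarrow> ('n,'l) ptil set set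
    \<Rightarrow> (('n,'l) ptil set \<times> ('n,'l) dpat set) set \<Rightarrow> (('n,'l) ptil set \<times> ('n,'l) dpat set) set
    \<Rightarrow> (('n,'l) ptil set \<times> ('n,'l) dpat set) set" where
  "rmult T A B g h = (THE k. \<exists>\<omega> c c'. (\<omega>,c) \<in> Rdom T A B \<and> (act \<omega> c, c') \<in> Rdom T A B \<and>
       composable T c c' \<and> g = rcls T A \<omega> c \<and> h = rcls T A (act \<omega> c) c' \<and>
       k = rcls T A \<omega> (dmult T c c'))"

text \<open>Generating open sets {[\<omega>,c] : L(c) \<preceq> \<omega>} of the topology of R'.\<close>
definition Vgen :: "('n::finite,'l) tile set \<Rightarrow> ('n,'l) dpat set
    \<Rightarrow> (('n,'l) ptil set \<times> ('n,'l) dpat set) set set" where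
  "Vgen T c = {rcls T (MII T) \<omega> c | \<omega>. \<omega> \<in> Omega T \<and> occ (Lu T c) \<omega>}"

text \<open>Open subsets of Rdom T A B, topologised as a subspace of
  (subspace B of the hull) \<times> (A with the discrete topology).\<close>
definition dom_open :: "('n::finite,'l) tile set \<Rightarrow> ('n,'l) dpat set set \<Rightarrow> ('n,'l) ptil set set
    \<Rightarrow> (('n,'l) ptil set \<times> ('n,'l) dpat set) set \<Rightarrow> bool" where
  "dom_open T A B D \<longleftrightarrow> D \<subseteq> Rdom T A B \<and>
     (\<forall>(\<omega>,c)\<in>D. \<exists>S. Omega_open T S \<and> \<omega> \<in> S \<and> (\<forall>\<omega>'\<in>S. (\<omega>',c) \<in> Rdom T A B \<longrightarrow> (\<omega>',c) \<in> D))"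

text \<open>Open sets of R_N in the quotient topology.\<close>
definition RN_open :: "('n::finite,'l) tile set \<Rightarrow> ('n,'l) dpat set set
    \<Rightarrow> (('n,'l) ptil set \<times> ('n,'l) dpat set) set set \<Rightarrow> bool" where
  "RN_open T N W \<longleftrightarrow> W \<subseteq> Rset T N (OmegaN T N) \<and>
     dom_open T N (OmegaN T N) {p \<in> Rdom T N (OmegaN T N). rcls T N (fst p) (snd p) \<in> W}"

end

theory Submission
  imports Defs
begin

text \<open>A point of \<open>\<Omega>\<^sub>N\<close> is the limit of an approximating sequence \<open>u\<close> of units in \<open>N\<close>, and the
  limit pointed tiling is the union of the representatives of the \<open>u\<^sub>\<nu>\<close> at one common tile.
  Since \<open>phihat\<close> rescales radii up to a bounded error, \<open>phihat \<circ> u\<close> is again approximating.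
  Everything rests on transporting placements: an arrow \<open>c\<close> placed at \<open>lim u\<close> is covered by a
  late unit \<open>w = u\<^sub>\<nu>\<close>, and the inequalities \<open>phihat a \<cdot> phihat b \<preceq> phihat (a b)\<close> place
  \<open>phihat c\<close> inside the representative of \<open>phihat w\<close>. This makes \<open>\<phi>\<close> well defined and
  compatible with the action and the products; since the placement of \<open>phihat c\<close> is read off
  a finite patch around the pointed tile, \<open>\<phi>\<close> is continuous.\<close>

section \<open>Translations and tilings\<close>

lemma tile_tr_0 [simp]: "tile_tr 0 t = t"
  by (simp add: tile_tr_def)

lemma tile_tr_add [simp]: "tile_tr a (tile_tr b t) = tile_tr (a + b) t"
  by (simp add: tile_tr_def image_image add.assoc)

lemma fst_tile_tr: "fst (tile_tr a t) = (\<lambda>x. a + x) ` fst t"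
  by (simp add: tile_tr_def)

lemma interior_fst_tile_tr: "interior (fst (tile_tr a t)) = (\<lambda>x. a + x) ` interior (fst t)"
  by (simp add: fst_tile_tr interior_translation)

lemma tile_tr_cancel [simp]: "tile_tr (-a) (tile_tr a t) = t" "tile_tr a (tile_tr (-a) t) = t"
  by simp_all

lemma tile_tr_inject [simp]: "tile_tr a s = tile_tr a t \<longleftrightarrow> s = t"
  by (metis tile_tr_cancel(1))

lemma pat_tr_0 [simp]: "pat_tr 0 P = P"
  by (simp add: pat_tr_def)

lemma pat_tr_add [simp]: "pat_tr a (pat_tr b P) = pat_tr (a + b) P"
  by (simp add: pat_tr_def image_image)

lemma pat_tr_cancel [simp]: "pat_tr (-a) (pat_tr a P) = P" "pat_tr a (pat_tr (-a) P) = P"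
  by simp_all

lemma pat_tr_mono: "P \<subseteq> Q \<Longrightarrow> pat_tr a P \<subseteq> pat_tr a Q"
  by (auto simp: pat_tr_def)

lemma pat_tr_subset_iff [simp]: "pat_tr a P \<subseteq> pat_tr a Q \<longleftrightarrow> P \<subseteq> Q"
  by (metis pat_tr_cancel(1) pat_tr_mono)

lemma pat_tr_Un: "pat_tr a (P \<union> Q) = pat_tr a P \<union> pat_tr a Q"
  by (auto simp: pat_tr_def)

lemma mem_pat_tr: "t \<in> pat_tr a P \<longleftrightarrow> tile_tr (-a) t \<in> P"
  by (auto simp: pat_tr_def image_iff) (metis tile_tr_cancel(2))

lemma tile_tr_in_pat_tr [simp]: "tile_tr a t \<in> pat_tr a P \<longleftrightarrow> t \<in> P"
  by (simp add: mem_pat_tr)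

lemma finite_pat_tr [simp]: "finite (pat_tr a P) = finite P"
  by (metis finite_imageI pat_tr_cancel(1) pat_tr_def)

lemma pat_tr_empty [simp]: "pat_tr a P = {} \<longleftrightarrow> P = {}"
  by (simp add: pat_tr_def)

lemma Union_fst_pat_tr: "\<Union>(fst ` pat_tr a P) = (\<lambda>x. a + x) ` \<Union>(fst ` P)"
  by (auto simp: pat_tr_def fst_tile_tr)

definition proper_tile :: "('n::finite,'l) tile \<Rightarrow> bool" where
  "proper_tile t \<longleftrightarrow> fst t \<noteq> {} \<and> bounded (fst t)"

lemma proper_tile_tile_tr [simp]: "proper_tile (tile_tr a t) \<longleftrightarrow> proper_tile t"
  by (metis bounded_translation fst_tile_tr image_is_empty proper_tile_def tile_tr_cancel(1))

lemma translation_invariant_bounded_imp_0: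
  fixes A :: "(real^'n::finite) set"
  assumes "A \<noteq> {}" "bounded A" "(\<lambda>x. a + x) ` A = A"
  shows "a = 0"
proof (rule ccontr)
  assume "a \<noteq> 0"
  have multiples: "z + of_nat n *\<^sub>R a \<in> A" if "z \<in> A" for z n
  proof (induction n)
    case (Suc n)
    then have "a + (z + of_nat n *\<^sub>R a) \<in> A" using assms(3) by blast
    then show ?case by (simp add: algebra_simps)
  qed (use that in simp)
  obtain z where z: "z \<in> A" using assms(1) by blast
  obtain B where B: "\<And>w. w \<in> A \<Longrightarrow> norm w \<le> B" using assms(2) bounded_iff by blast
  obtain n :: nat where n: "2 * B / norm a < of_nat n" using reals_Archimedean2 by blast
  have "of_nat n * norm a = norm (of_nat n *\<^sub>R a)" by simp
  also have "\<dots> \<le> norm (z + of_nat n *\<^sub>R a) + norm z"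
    by (metis add_diff_cancel_left' norm_triangle_ineq4 add.commute)
  also have "\<dots> \<le> 2 * B" using B[OF z] B[OF multiples[OF z, of n]] by simp
  finally show False using n \<open>a \<noteq> 0\<close> by (simp add: field_simps)
qed

lemma tile_tr_eq_self_imp_0: "proper_tile t \<Longrightarrow> tile_tr a t = t \<Longrightarrow> a = 0"
  unfolding proper_tile_def
  by (metis fst_conv prod.collapse translation_invariant_bounded_imp_0 fst_tile_tr)

lemma tile_tr_eq_imp_eq:
  assumes "proper_tile t" "tile_tr a t = tile_tr b t"
  shows "a = b"
proof -
  have "tile_tr (-b + a) t = t" using assms(2) by (metis tile_tr_add tile_tr_cancel(1))
  then have "-b + a = 0" using tile_tr_eq_self_imp_0 assms(1) by blast
  then show ?thesis by (simp add: add.commute neg_eq_iff_add_eq_0)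
qed

lemma tiling_tile:
  assumes "is_tiling S" "t \<in> S"
  shows "closed (fst t)" "bounded (fst t)" "fst t \<noteq> {}" "closure (interior (fst t)) = fst t"
  using assms unfolding is_tiling_def by simp_all

lemma tiling_proper_tile: "is_tiling S \<Longrightarrow> t \<in> S \<Longrightarrow> proper_tile t"
  using tiling_tile proper_tile_def by blast

lemma tiling_interior_nonempty: "is_tiling S \<Longrightarrow> t \<in> S \<Longrightarrow> interior (fst t) \<noteq> {}"
  using tiling_tile by (metis closure_empty)

lemma tiling_covers: "is_tiling S \<Longrightarrow> \<exists>t\<in>S. z \<in> fst t"
  unfolding is_tiling_def by (metis UNIV_I UN_E)

lemma tiling_interiors_disjoint:
  "is_tiling S \<Longrightarrow> t \<in> S \<Longrightarrow> t' \<in> S \<Longrightarrow> t \<noteq> t' \<Longrightarrow> interior (fst t) \<inter> interior (fst t') = {}"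
  unfolding is_tiling_def by simp

lemma tiling_countable: "is_tiling S \<Longrightarrow> countable S"
  unfolding is_tiling_def by simp

lemma tiling_flc:
  "is_tiling S \<Longrightarrow> \<exists>F. finite F \<and> (\<forall>t\<in>S. \<forall>t'\<in>S. t \<noteq> t' \<and> fst t \<inter> fst t' \<noteq> {} \<longrightarrow>
      (\<exists>(s,s')\<in>F. \<exists>b. t = tile_tr b s \<and> t' = tile_tr b s'))"
  unfolding is_tiling_def by (elim conjE) assumption

lemma is_tiling_pat_tr:
  assumes S: "is_tiling S"
  shows "is_tiling (pat_tr a S)"
proof -
  obtain F where F: "finite F" "\<forall>t\<in>S. \<forall>t'\<in>S. t \<noteq> t' \<and> fst t \<inter> fst t' \<noteq> {} \<longrightarrow>
      (\<exists>(s,s')\<in>F. \<exists>b. t = tile_tr b s \<and> t' = tile_tr b s')"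
    using tiling_flc[OF S] by blast
  have flc: "\<exists>(s,s')\<in>F. \<exists>b. tile_tr a t = tile_tr b s \<and> tile_tr a t' = tile_tr b s'"
    if tt: "t \<in> S" "t' \<in> S" "t \<noteq> t'" "fst (tile_tr a t) \<inter> fst (tile_tr a t') \<noteq> {}" for t t'
  proof -
    have meet: "fst t \<inter> fst t' \<noteq> {}" using tt(4) by (auto simp: fst_tile_tr)
    obtain s s' b where "(s,s') \<in> F" "t = tile_tr b s" "t' = tile_tr b s'"
      using F(2) tt(1-3) meet by blast
    then show ?thesis by (intro bexI[of _ "(s,s')"]) auto
  qed
  have tiles: "bounded (fst (tile_tr a t)) \<and> closed (fst (tile_tr a t)) \<and> fst (tile_tr a t) \<noteq> {} \<and>
      closure (interior (fst (tile_tr a t))) = fst (tile_tr a t)" if "t \<in> S" for t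
    using tiling_tile[OF S that] unfolding fst_tile_tr
    by (simp add: bounded_translation closed_translation interior_translation closure_translation)
  have disjoint: "interior (fst (tile_tr a t)) \<inter> interior (fst (tile_tr a t')) = {}"
    if "t \<in> S" "t' \<in> S" "t \<noteq> t'" for t t'
    using tiling_interiors_disjoint[OF S that] unfolding interior_fst_tile_tr by auto
  have "countable (pat_tr a S)" using tiling_countable[OF S] unfolding pat_tr_def by simp
  moreover have "\<forall>t\<in>pat_tr a S. bounded (fst t) \<and> closed (fst t) \<and> fst t \<noteq> {} \<and>
      closure (interior (fst t)) = fst t"
    unfolding pat_tr_def using tiles by blast
  moreover have "\<Union>(fst ` pat_tr a S) = UNIV"
    using S unfolding Union_fst_pat_tr is_tiling_def by (simp add: surj_plus)
  moreover have "\<forall>t\<in>pat_tr a S. \<forall>t'\<in>pat_tr a S. t \<noteq> t' \<longrightarrow> interior (fst t) \<inter> interior (fst t') = {}"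
    unfolding pat_tr_def using disjoint by blast
  moreover have "\<forall>t\<in>pat_tr a S. \<forall>t'\<in>pat_tr a S. t \<noteq> t' \<and> fst t \<inter> fst t' \<noteq> {} \<longrightarrow>
      (\<exists>(s,s')\<in>F. \<exists>b. t = tile_tr b s \<and> t' = tile_tr b s')"
    unfolding pat_tr_def using flc by blast
  ultimately show ?thesis
    unfolding is_tiling_def using F(1) by (intro conjI exI[of _ F]) assumption+
qed

text \<open>By Baire's theorem, a nonempty open subset of a tile is not covered by countably many
  other tiles, since these meet it only in closed sets with empty interior.\<close>

lemma tiling_mem_if_interior_meets_covered:
  assumes S: "is_tiling S" and t: "t \<in> S" and P: "P \<subseteq> S"
    and U: "open U" "U \<subseteq> \<Union>(fst ` P)" "interior (fst t) \<inter> U \<noteq> {}"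
  shows "t \<in> P"
proof (rule ccontr)
  assume "t \<notin> P"
  define G where "G = (\<lambda>t'. fst t' \<inter> fst t) ` P"
  have "countable P" using countable_subset[OF P] S unfolding is_tiling_def by blast
  then have "countable G" unfolding G_def by simp
  moreover have "closedin euclidean g \<and> euclidean interior_of g = {}" if g: "g \<in> G" for g
  proof -
    obtain t' where t': "t' \<in> P" "g = fst t' \<inter> fst t" using g G_def by blast
    have "t' \<in> S" "t' \<noteq> t" using t' P \<open>t \<notin> P\<close> by blast+
    then have "interior g = {}"
      using tiling_interiors_disjoint[OF S _ t] t' by (simp add: interior_Int)
    moreover have "closed g" using tiling_tile(1)[OF S] t \<open>t' \<in> S\<close> t' by (simp add: closed_Int)
    ultimately show ?thesis by simp
  qed
  ultimately have "euclidean interior_of \<Union>G = {}"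
    using Baire_category_alt completely_metrizable_space_euclidean by (metis topspace_euclidean)
  then have "interior (\<Union>G) = {}" by simp
  moreover have "interior (fst t) \<inter> U \<subseteq> \<Union>G"
    using U(2) interior_subset unfolding G_def by blast
  ultimately show False
    using U(1,3) interior_maximal[of "interior (fst t) \<inter> U" "\<Union>G"] by blast
qed

lemma tiling_mem_if_covered:
  assumes S: "is_tiling S" and t: "t \<in> S" and P: "P \<subseteq> S" and cov: "fst t \<subseteq> \<Union>(fst ` P)"
  shows "t \<in> P"
  using tiling_mem_if_interior_meets_covered[OF S t P open_interior]
    interior_subset cov tiling_interior_nonempty[OF S t] by blast

lemma tiling_eq_if_subset_covers:
  assumes "is_tiling S'" "S \<subseteq> S'" "\<Union>(fst ` S) = UNIV"
  shows "S = S'"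
  using tiling_mem_if_interior_meets_covered[OF assms(1) _ assms(2) open_UNIV]
    tiling_interior_nonempty[OF assms(1)] assms(2,3) by blast


lemma is_tiling_if_pairs_occur:
  assumes T: "is_tiling T" and S: "countable S" "\<Union>(fst ` S) = UNIV"
    and pairs: "\<And>t t'. t \<in> S \<Longrightarrow> t' \<in> S \<Longrightarrow> \<exists>a. tile_tr a t \<in> T \<and> tile_tr a t' \<in> T"
  shows "is_tiling S"
proof -
  have tiles: "bounded (fst t) \<and> closed (fst t) \<and> fst t \<noteq> {} \<and> closure (interior (fst t)) = fst t"
    if t: "t \<in> S" for t
  proof -
    obtain a where "tile_tr a t \<in> T" using pairs[OF t t] by blast
    then have "is_tiling (pat_tr (-a) T)" "t \<in> pat_tr (-a) T" using is_tiling_pat_tr[OF T] by (auto simp: mem_pat_tr)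
    then show ?thesis using tiling_tile by blast
  qed
  have disjoint: "interior (fst t) \<inter> interior (fst t') = {}" if tt: "t \<in> S" "t' \<in> S" "t \<noteq> t'" for t t'
  proof -
    obtain a where "tile_tr a t \<in> T" "tile_tr a t' \<in> T" using pairs[OF tt(1,2)] by blast
    then have "interior (fst (tile_tr a t)) \<inter> interior (fst (tile_tr a t')) = {}"
      using tiling_interiors_disjoint[OF T] tt(3) by simp
    then show ?thesis unfolding interior_fst_tile_tr by blast
  qed
  obtain F where F: "finite F" "\<forall>t\<in>T. \<forall>t'\<in>T. t \<noteq> t' \<and> fst t \<inter> fst t' \<noteq> {} \<longrightarrow>
      (\<exists>(s,s')\<in>F. \<exists>b. t = tile_tr b s \<and> t' = tile_tr b s')"
    using tiling_flc[OF T] by blast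
  have flc: "\<exists>(s,s')\<in>F. \<exists>b. t = tile_tr b s \<and> t' = tile_tr b s'"
    if tt: "t \<in> S" "t' \<in> S" "t \<noteq> t'" "fst t \<inter> fst t' \<noteq> {}" for t t'
  proof -
    obtain a where a: "tile_tr a t \<in> T" "tile_tr a t' \<in> T" using pairs[OF tt(1,2)] by blast
    have "fst (tile_tr a t) \<inter> fst (tile_tr a t') \<noteq> {}" using tt(4) unfolding fst_tile_tr by blast
    then obtain s s' b where "(s,s') \<in> F" "tile_tr a t = tile_tr b s" "tile_tr a t' = tile_tr b s'"
      using F(2) a tt(3) by fastforce
    then have "(s,s') \<in> F" "t = tile_tr (-a + b) s" "t' = tile_tr (-a + b) s'"
      by (metis tile_tr_add tile_tr_cancel(1))+
    then show ?thesis by blast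
  qed
  show ?thesis
    unfolding is_tiling_def using S F(1) tiles disjoint flc by (intro conjI exI[of _ F]) blast+
qed

section \<open>The almost groupoid \<open>M\<^sub>I\<^sub>I\<close>\<close>

lemma dp_tr_simp [simp]: "dp_tr a (M,x,y) = (pat_tr a M, tile_tr a x, tile_tr a y)"
  by (simp add: dp_tr_def)

lemma mem_dpclass:
  "(K,p,e) \<in> dpclass (M,x,y) \<longleftrightarrow> (\<exists>a. K = pat_tr a M \<and> p = tile_tr a x \<and> e = tile_tr a y)"
  by (auto simp: dpclass_def)

lemma dpclass_self [simp]: "(M,x,y) \<in> dpclass (M,x,y)"
  unfolding mem_dpclass by (rule exI[of _ 0]) simp

lemma dpclass_eqI:
  assumes "(K,p,e) \<in> dpclass (M,x,y)"
  shows "dpclass (K,p,e) = dpclass (M,x,y)"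
proof -
  obtain a where a: "K = pat_tr a M" "p = tile_tr a x" "e = tile_tr a y"
    using assms by (auto simp: mem_dpclass)
  have "dpclass (K,p,e) = range (\<lambda>b. dp_tr (b + a) (M,x,y))"
    unfolding dpclass_def a by (simp add: add.assoc)
  also have "\<dots> = (\<lambda>b. dp_tr b (M,x,y)) ` range (\<lambda>b. b + a)"
    by (simp only: image_image)
  also have "\<dots> = dpclass (M,x,y)"
    unfolding dpclass_def by (simp only: surj_plus_right)
  finally show ?thesis .
qed

lemma dpclass_tr [simp]: "dpclass (pat_tr a M, tile_tr a x, tile_tr a y) = dpclass (M,x,y)"
  by (rule dpclass_eqI) (auto simp: mem_dpclass)

lemma dpclass_eq_iff: "dpclass (K,p,e) = dpclass (M,x,y) \<longleftrightarrow> (K,p,e) \<in> dpclass (M,x,y)"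
  by (metis dpclass_eqI dpclass_self)

lemma dle_dpclass_iff:
  "dle (dpclass (M,x,y)) (dpclass (N,x',y')) \<longleftrightarrow>
     (\<exists>a. pat_tr a M \<subseteq> N \<and> tile_tr a x = x' \<and> tile_tr a y = y')"
proof
  assume "dle (dpclass (M,x,y)) (dpclass (N,x',y'))"
  then obtain M1 N1 x1 y1 where h: "(M1,x1,y1) \<in> dpclass (M,x,y)" "(N1,x1,y1) \<in> dpclass (N,x',y')"
    "M1 \<subseteq> N1"
    by (auto simp: dle_def)
  obtain a where a: "M1 = pat_tr a M" "x1 = tile_tr a x" "y1 = tile_tr a y"
    using h(1) by (auto simp: mem_dpclass)
  obtain b where b: "N1 = pat_tr b N" "x1 = tile_tr b x'" "y1 = tile_tr b y'"
    using h(2) by (auto simp: mem_dpclass)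
  have "pat_tr (-b + a) M \<subseteq> N"
    using h(3) a b pat_tr_subset_iff[of b "pat_tr (-b + a) M" N] by (simp add: add.assoc[symmetric])
  moreover have "tile_tr (-b + a) x = x'" "tile_tr (-b + a) y = y'"
    using a b by (metis tile_tr_add tile_tr_cancel(1))+
  ultimately show "\<exists>a. pat_tr a M \<subseteq> N \<and> tile_tr a x = x' \<and> tile_tr a y = y'" by blast
next
  assume "\<exists>a. pat_tr a M \<subseteq> N \<and> tile_tr a x = x' \<and> tile_tr a y = y'"
  then obtain a where "pat_tr a M \<subseteq> N" "tile_tr a x = x'" "tile_tr a y = y'" by blast
  then show "dle (dpclass (M,x,y)) (dpclass (N,x',y'))"
    unfolding dle_def
    by (intro exI[of _ "pat_tr a M"] exI[of _ N] exI[of _ x'] exI[of _ y']) (auto simp: mem_dpclass)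
qed

lemma dinv_dpclass [simp]: "dinv (dpclass (M,x,y)) = dpclass (M,y,x)"
  unfolding dinv_def dpclass_def by (auto simp: image_image)

definition translated_pattern :: "('n::finite,'l) tile set \<Rightarrow> ('n,'l) tile set \<Rightarrow> bool" where
  "translated_pattern T K \<longleftrightarrow> finite K \<and> K \<noteq> {} \<and> (\<exists>a. pat_tr a K \<subseteq> T)"

lemma translated_pattern_proper_tile:
  assumes "is_tiling T" "translated_pattern T K" "t \<in> K"
  shows "proper_tile t"
proof -
  obtain a where "pat_tr a K \<subseteq> T" using assms(2) translated_pattern_def by blast
  then have "tile_tr a t \<in> T" using assms(3) by auto
  then show ?thesis using tiling_proper_tile[OF assms(1) \<open>tile_tr a t \<in> T\<close>] by simp
qed

lemma dpclass_in_MII_iff: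
  "dpclass (K,p,e) \<in> MII T \<longleftrightarrow> translated_pattern T K \<and> p \<in> K \<and> e \<in> K"
proof
  assume "dpclass (K,p,e) \<in> MII T"
  then obtain M x y where h: "dpclass (K,p,e) = dpclass (M,x,y)" "is_pattern T M" "x \<in> M" "y \<in> M"
    by (auto simp: MII_def)
  then obtain a where a: "K = pat_tr a M" "p = tile_tr a x" "e = tile_tr a y"
    using dpclass_eq_iff mem_dpclass by metis
  have "pat_tr (-a) K \<subseteq> T" "finite K" "K \<noteq> {}" using h(2) unfolding a is_pattern_def by simp_all
  moreover have "p \<in> K" "e \<in> K" using h(3,4) unfolding a by simp_all
  ultimately show "translated_pattern T K \<and> p \<in> K \<and> e \<in> K"
    unfolding translated_pattern_def by blast
next
  assume h: "translated_pattern T K \<and> p \<in> K \<and> e \<in> K"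
  then obtain a where a: "pat_tr a K \<subseteq> T" by (auto simp: translated_pattern_def)
  have "is_pattern T (pat_tr a K)" using h a by (auto simp: is_pattern_def translated_pattern_def)
  then show "dpclass (K,p,e) \<in> MII T"
    unfolding MII_def mem_Collect_eq
    by (intro exI[of _ "pat_tr a K"] exI[of _ "tile_tr a p"] exI[of _ "tile_tr a e"]) (use h in simp)
qed

lemma is_pattern_translated_pattern: "is_pattern T L \<Longrightarrow> translated_pattern T L"
  unfolding is_pattern_def translated_pattern_def by (metis pat_tr_0)

lemma MII_E:
  assumes "c \<in> MII T"
  obtains K p e where "c = dpclass (K,p,e)" "translated_pattern T K" "p \<in> K" "e \<in> K"
  using assms is_pattern_translated_pattern unfolding MII_def by blast

lemma MII_eq_dpclass:
  assumes "c \<in> MII T" "(K,p,e) \<in> c"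
  shows "c = dpclass (K,p,e) \<and> translated_pattern T K \<and> p \<in> K \<and> e \<in> K"
proof -
  obtain M x y where "c = dpclass (M,x,y)" using assms(1) MII_E by blast
  then have "c = dpclass (K,p,e)" using assms(2) dpclass_eqI by metis
  then show ?thesis using assms(1) by (simp add: dpclass_in_MII_iff)
qed

lemma MII_pat_tr_mem: "c \<in> MII T \<Longrightarrow> (K,p,e) \<in> c \<Longrightarrow> (pat_tr a K, tile_tr a p, tile_tr a e) \<in> c"
  using MII_eq_dpclass[of c T K p e] dpclass_tr[of a K p e] dpclass_self by metis

lemma dinv_MII:
  assumes "c \<in> MII T"
  shows "dinv c \<in> MII T"
proof -
  obtain K p e where "c = dpclass (K,p,e)" "translated_pattern T K" "p \<in> K" "e \<in> K"
    using assms MII_E by blast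
  then show ?thesis by (simp add: dpclass_in_MII_iff)
qed

text \<open>Tiles are bounded, so the pointed tile of a representative fixes the translation.\<close>

lemma MII_rep_unique:
  assumes T: "is_tiling T" and c: "c \<in> MII T" and "(K,p,e) \<in> c" "(K',p,e') \<in> c"
  shows "K' = K \<and> e' = e"
proof -
  have c_eq: "c = dpclass (K,p,e)" "translated_pattern T K" "p \<in> K"
    using MII_eq_dpclass[OF c assms(3)] by auto
  then obtain a where a: "K' = pat_tr a K" "p = tile_tr a p" "e' = tile_tr a e"
    using assms(4) mem_dpclass by metis
  have "a = 0"
    using a(2) tile_tr_eq_self_imp_0 translated_pattern_proper_tile[OF T c_eq(2,3)] by metis
  then show ?thesis using a by simp
qed

lemma glue_cands_dest:
  assumes T: "is_tiling T" and c': "dpclass (M',x',y') \<in> MII T"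
    and m: "m \<in> glue_cands T (dpclass (M,x,y)) (dpclass (M',x',y'))"
    and b: "tile_tr b x' = y"
  shows "\<exists>L z1 z2 a. m = dpclass (L,z1,z2) \<and> is_pattern T L \<and> z1 \<in> L \<and> z2 \<in> L \<and>
      pat_tr a (M \<union> pat_tr b M') \<subseteq> L \<and> tile_tr a x = z1 \<and> tile_tr a (tile_tr b y') = z2"
proof -
  obtain L z1 z2 z where m: "m = dpclass (L,z1,z2)" "is_pattern T L" "z1 \<in> L" "z2 \<in> L"
    "dle (dpclass (M,x,y)) (dpclass (L,z1,z))" "dle (dpclass (M',x',y')) (dpclass (L,z,z2))"
    using m unfolding glue_cands_def by blast
  obtain a where a: "pat_tr a M \<subseteq> L" "tile_tr a x = z1" "tile_tr a y = z"
    using m(5) dle_dpclass_iff by blast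
  obtain a' where a': "pat_tr a' M' \<subseteq> L" "tile_tr a' x' = z" "tile_tr a' y' = z2"
    using m(6) dle_dpclass_iff by blast
  have "proper_tile x'"
    using c' dpclass_in_MII_iff translated_pattern_proper_tile[OF T] by blast
  moreover have "tile_tr a' x' = tile_tr (a + b) x'" using a(3) a'(2) b by (metis tile_tr_add)
  ultimately have "a' = a + b" using tile_tr_eq_imp_eq by blast
  then show ?thesis
    using m a a' by (intro exI[of _ L] exI[of _ z1] exI[of _ z2] exI[of _ a]) (auto simp: pat_tr_Un)
qed

lemma glue_cands_glued:
  assumes c: "dpclass (M,x,y) \<in> MII T" and c': "dpclass (M',x',y') \<in> MII T"
    and b: "tile_tr b x' = y" and a: "pat_tr a (M \<union> pat_tr b M') \<subseteq> T"
  shows "dpclass (M \<union> pat_tr b M', x, tile_tr b y') \<in> glue_cands T (dpclass (M,x,y)) (dpclass (M',x',y'))"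
proof -
  have M: "finite M" "finite M'" "x \<in> M" "y \<in> M" "y' \<in> M'"
    using c c' by (auto simp: dpclass_in_MII_iff translated_pattern_def)
  let ?L = "pat_tr a (M \<union> pat_tr b M')"
  have "is_pattern T ?L" using a M by (auto simp: is_pattern_def pat_tr_Un)
  moreover have "dle (dpclass (M,x,y)) (dpclass (?L, tile_tr a x, tile_tr a y))"
    unfolding dle_dpclass_iff by (intro exI[of _ a]) (auto simp: pat_tr_Un)
  moreover have "dle (dpclass (M',x',y')) (dpclass (?L, tile_tr a y, tile_tr a (tile_tr b y')))"
    unfolding dle_dpclass_iff using b by (intro exI[of _ "a + b"]) (auto simp: pat_tr_Un)
  moreover have "tile_tr a x \<in> ?L" "tile_tr a y \<in> ?L" "tile_tr a (tile_tr b y') \<in> ?L"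
    using M by (auto simp: pat_tr_Un)
  ultimately show ?thesis
    unfolding glue_cands_def using dpclass_tr[of a "M \<union> pat_tr b M'" x "tile_tr b y'"] by blast
qed

lemma composable_dpclass_iff:
  assumes T: "is_tiling T" and c: "dpclass (M,x,y) \<in> MII T" and c': "dpclass (M',x',y') \<in> MII T"
  shows "composable T (dpclass (M,x,y)) (dpclass (M',x',y')) \<longleftrightarrow>
     (\<exists>b. tile_tr b x' = y \<and> (\<exists>a. pat_tr a (M \<union> pat_tr b M') \<subseteq> T))"
proof
  assume "composable T (dpclass (M,x,y)) (dpclass (M',x',y'))"
  then obtain m where m: "m \<in> glue_cands T (dpclass (M,x,y)) (dpclass (M',x',y'))"
    unfolding composable_def by blast
  then obtain L z1 z2 z where L: "dle (dpclass (M,x,y)) (dpclass (L,z1,z))"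
    "dle (dpclass (M',x',y')) (dpclass (L,z,z2))"
    unfolding glue_cands_def by blast
  obtain a where a: "tile_tr a y = z" using L(1) dle_dpclass_iff by blast
  obtain a' where a': "tile_tr a' x' = z" using L(2) dle_dpclass_iff by blast
  have b: "tile_tr (-a + a') x' = y" using a a' by (metis tile_tr_add tile_tr_cancel(1))
  obtain L' a2 where "is_pattern T L'" "pat_tr a2 (M \<union> pat_tr (-a + a') M') \<subseteq> L'"
    using glue_cands_dest[OF T c' m b] by blast
  then show "\<exists>b. tile_tr b x' = y \<and> (\<exists>a. pat_tr a (M \<union> pat_tr b M') \<subseteq> T)"
    using b unfolding is_pattern_def by blast
next
  assume "\<exists>b. tile_tr b x' = y \<and> (\<exists>a. pat_tr a (M \<union> pat_tr b M') \<subseteq> T)"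
  then show "composable T (dpclass (M,x,y)) (dpclass (M',x',y'))"
    unfolding composable_def using glue_cands_glued[OF c c'] by blast
qed

text \<open>The glued pattern is the least candidate, since every candidate contains a translate of it.\<close>

lemma dmult_dpclass:
  assumes T: "is_tiling T" and c: "dpclass (M,x,y) \<in> MII T" and c': "dpclass (M',x',y') \<in> MII T"
    and comp: "composable T (dpclass (M,x,y)) (dpclass (M',x',y'))"
    and b: "tile_tr b x' = y"
  shows "dmult T (dpclass (M,x,y)) (dpclass (M',x',y')) = dpclass (M \<union> pat_tr b M', x, tile_tr b y')"
proof -
  let ?cands = "glue_cands T (dpclass (M,x,y)) (dpclass (M',x',y'))"
  let ?K = "M \<union> pat_tr b M'"
  let ?m0 = "dpclass (?K, x, tile_tr b y')"
  have least: "dle ?m0 m" if "m \<in> ?cands" for m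
    using glue_cands_dest[OF T c' that b] dle_dpclass_iff by metis
  have m0: "?m0 \<in> ?cands"
  proof -
    obtain a where "pat_tr a ?K \<subseteq> T"
      using comp composable_dpclass_iff[OF T c c'] b tile_tr_eq_imp_eq
        translated_pattern_proper_tile[OF T] c' dpclass_in_MII_iff by metis
    then show ?thesis using glue_cands_glued[OF c c' b] by blast
  qed
  have "m = ?m0" if m: "m \<in> ?cands" "\<forall>m'\<in>?cands. dle m m'" for m
  proof -
    obtain L a where L: "m = dpclass (L, tile_tr a x, tile_tr a (tile_tr b y'))" "pat_tr a ?K \<subseteq> L"
      using glue_cands_dest[OF T c' m(1) b] by blast
    obtain a' where a': "pat_tr a' L \<subseteq> ?K" "tile_tr a' (tile_tr a x) = x"
      using m(2) m0 L(1) dle_dpclass_iff by metis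
    have "proper_tile x" using c dpclass_in_MII_iff translated_pattern_proper_tile[OF T] by blast
    then have "a' + a = 0" using a'(2) tile_tr_eq_self_imp_0 by (metis tile_tr_add)
    then have "a' = -a" by (simp add: add_eq_0_iff)
    then have "L = pat_tr a ?K"
      using a'(1) L(2) pat_tr_subset_iff[of "-a" L "pat_tr a ?K"] by auto
    then show ?thesis using L(1) dpclass_tr[of a ?K x "tile_tr b y'"] by simp
  qed
  then show ?thesis unfolding dmult_def using m0 least by (intro the_equality) blast+
qed

lemma dmult_MII:
  assumes T: "is_tiling T" and c: "c \<in> MII T" and c': "c' \<in> MII T" and comp: "composable T c c'"
  shows "dmult T c c' \<in> MII T"
proof -
  obtain M x y where cM: "c = dpclass (M,x,y)" using c MII_E by blast
  obtain M' x' y' where cM': "c' = dpclass (M',x',y')" using c' MII_E by blast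
  obtain b a where b: "tile_tr b x' = y" "pat_tr a (M \<union> pat_tr b M') \<subseteq> T"
    using composable_dpclass_iff[OF T] c c' comp cM cM' by blast
  have "translated_pattern T (M \<union> pat_tr b M')" "x \<in> M \<union> pat_tr b M'" "tile_tr b y' \<in> M \<union> pat_tr b M'"
    using b c c' cM cM' by (auto simp: dpclass_in_MII_iff translated_pattern_def)
  then show ?thesis using dmult_dpclass[OF T] c c' comp cM cM' b(1) by (simp add: dpclass_in_MII_iff)
qed

section \<open>Placements, units and the action on the hull\<close>

lemma mem_ptclass: "(S',p') \<in> ptclass (S,p) \<longleftrightarrow> (\<exists>a. S' = pat_tr a S \<and> p' = tile_tr a p)"
  by (auto simp: ptclass_def)

lemma ptclass_self [simp]: "(S,p) \<in> ptclass (S,p)"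
  unfolding mem_ptclass by (rule exI[of _ 0]) simp

lemma ptclass_eqI:
  assumes "(S',p') \<in> ptclass (S,p)"
  shows "ptclass (S',p') = ptclass (S,p)"
proof -
  obtain a where a: "S' = pat_tr a S" "p' = tile_tr a p" using assms by (auto simp: mem_ptclass)
  have "ptclass (S',p') = range (\<lambda>b. (pat_tr (b + a) S, tile_tr (b + a) p))"
    unfolding ptclass_def a by (simp add: add.assoc)
  also have "\<dots> = (\<lambda>b. (pat_tr b S, tile_tr b p)) ` range (\<lambda>b. b + a)"
    by (simp only: image_image)
  also have "\<dots> = ptclass (S,p)"
    unfolding ptclass_def by (simp only: surj_plus_right fst_conv snd_conv)
  finally show ?thesis .
qed

lemma ptclass_tr [simp]: "ptclass (pat_tr a S, tile_tr a p) = ptclass (S,p)"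
  by (rule ptclass_eqI) (auto simp: mem_ptclass)

lemma ptclass_eq_iff: "ptclass (S',p') = ptclass (S,p) \<longleftrightarrow> (S',p') \<in> ptclass (S,p)"
  by (metis ptclass_eqI ptclass_self)

lemma Omega_E:
  assumes "\<omega> \<in> Omega T"
  obtains S p where "is_tiling S" "p \<in> S" "\<omega> = ptclass (S,p)"
  using assms unfolding Omega_def is_ptclass_def by blast

definition placed :: "('n::finite,'l) tile set \<Rightarrow> ('n,'l) tile \<Rightarrow> ('n,'l) dpat set \<Rightarrow> ('n,'l) tile \<Rightarrow> bool" where
  "placed S p c e \<longleftrightarrow> (\<exists>K. (K,p,e) \<in> c \<and> K \<subseteq> S)"

lemma placed_end_unique:
  "is_tiling T \<Longrightarrow> c \<in> MII T \<Longrightarrow> placed S p c e \<Longrightarrow> placed S' p c e' \<Longrightarrow> e' = e"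
  using MII_rep_unique unfolding placed_def by metis

lemma placed_mono: "placed S p c e \<Longrightarrow> S \<subseteq> S' \<Longrightarrow> placed S' p c e"
  unfolding placed_def by blast

lemma placed_pat_tr: "c \<in> MII T \<Longrightarrow> placed S p c e \<Longrightarrow> placed (pat_tr a S) (tile_tr a p) c (tile_tr a e)"
  unfolding placed_def using MII_pat_tr_mem pat_tr_mono by metis

lemma placed_pat_tr_iff:
  "c \<in> MII T \<Longrightarrow> placed (pat_tr a S) (tile_tr a p) c (tile_tr a e) \<longleftrightarrow> placed S p c e"
  by (metis placed_pat_tr pat_tr_cancel(1) tile_tr_cancel(1))

lemma placed_in:
  assumes "c \<in> MII T" "placed S p c e"
  shows "p \<in> S" "e \<in> S"
proof -
  obtain K where "(K,p,e) \<in> c" "K \<subseteq> S" using assms(2) placed_def by blast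
  then show "p \<in> S" "e \<in> S" using MII_eq_dpclass[OF assms(1)] by blast+
qed

lemma occ_ptclass_iff:
  assumes u: "u \<in> MII T"
  shows "occ u (ptclass (S,p)) \<longleftrightarrow> placed S p u p"
proof
  assume "occ u (ptclass (S,p))"
  then obtain M x S1 where h: "(M,x,x) \<in> u" "(S1,x) \<in> ptclass (S,p)" "M \<subseteq> S1"
    unfolding occ_def by blast
  then obtain a where a: "S1 = pat_tr a S" "x = tile_tr a p" by (auto simp: mem_ptclass)
  have "(pat_tr (-a) M, p, p) \<in> u" using MII_pat_tr_mem[OF u h(1), of "-a"] a by simp
  moreover have "pat_tr (-a) M \<subseteq> S" using h(3) a pat_tr_mono[OF h(3), of "-a"] by simp
  ultimately show "placed S p u p" unfolding placed_def by blast
next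
  assume "placed S p u p"
  then show "occ u (ptclass (S,p))" unfolding placed_def occ_def using ptclass_self by blast
qed

lemma unit_mem_eq: "is_unit T u \<Longrightarrow> (K,p,e) \<in> u \<Longrightarrow> e = p"
  unfolding is_unit_def by (auto simp: mem_dpclass)

lemma is_unit_dpclass_iff:
  assumes "dpclass (K,p,e) \<in> MII T"
  shows "is_unit T (dpclass (K,p,e)) \<longleftrightarrow> e = p"
proof
  assume "is_unit T (dpclass (K,p,e))"
  then show "e = p" using unit_mem_eq dpclass_self by blast
next
  assume "e = p"
  then show "is_unit T (dpclass (K,p,e))" unfolding is_unit_def using assms by blast
qed

lemma dinv_unit: "is_unit T u \<Longrightarrow> dinv u = u"
  unfolding is_unit_def by auto

lemma Lu_dpclass:
  assumes T: "is_tiling T" and c: "dpclass (M,x,y) \<in> MII T"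
  shows "Lu T (dpclass (M,x,y)) = dpclass (M,x,x)"
proof -
  have c': "dpclass (M,y,x) \<in> MII T" using c by (simp add: dpclass_in_MII_iff)
  obtain a where a: "pat_tr a M \<subseteq> T" using c by (auto simp: dpclass_in_MII_iff translated_pattern_def)
  have "composable T (dpclass (M,x,y)) (dpclass (M,y,x))"
    unfolding composable_dpclass_iff[OF T c c'] by (intro exI[of _ 0]) (use a in auto)
  then show ?thesis unfolding Lu_def dinv_dpclass using dmult_dpclass[OF T c c', of 0] by simp
qed

lemma occ_Lu_ptclass_iff:
  assumes T: "is_tiling T" and c: "c \<in> MII T"
  shows "occ (Lu T c) (ptclass (S,p)) \<longleftrightarrow> (\<exists>e. placed S p c e)"
proof -
  obtain M x y where cM: "c = dpclass (M,x,y)" "translated_pattern T M" "x \<in> M" "y \<in> M"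
    using MII_E[OF c] by blast
  have L: "Lu T c = dpclass (M,x,x)" using Lu_dpclass T c cM by blast
  have LM: "Lu T c \<in> MII T" using L cM by (simp add: dpclass_in_MII_iff)
  have "occ (Lu T c) (ptclass (S,p)) \<longleftrightarrow> placed S p (dpclass (M,x,x)) p"
    using occ_ptclass_iff[OF LM] L by simp
  also have "\<dots> \<longleftrightarrow> (\<exists>e. placed S p (dpclass (M,x,y)) e)"
    unfolding placed_def mem_dpclass by (rule iffI) blast+
  finally show ?thesis using cM(1) by simp
qed

lemma dle_MII_mem:
  assumes "c \<in> MII T" "d \<in> MII T" "dle c d" "(K,p,e) \<in> d"
  shows "\<exists>Kc. (Kc,p,e) \<in> c \<and> Kc \<subseteq> K"
proof -
  obtain M x y where cM: "c = dpclass (M,x,y)" using MII_E assms(1) by blast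
  have dK: "d = dpclass (K,p,e)" using MII_eq_dpclass assms(2,4) by blast
  obtain a where "pat_tr a M \<subseteq> K" "tile_tr a x = p" "tile_tr a y = e"
    using assms(3) cM dK dle_dpclass_iff by metis
  then show ?thesis using cM by (auto simp: mem_dpclass)
qed

lemma placed_if_dle:
  assumes "c \<in> MII T" "d \<in> MII T" "dle c d" "placed S p d e"
  shows "placed S p c e"
proof -
  obtain K where K: "(K,p,e) \<in> d" "K \<subseteq> S" using assms(4) placed_def by blast
  obtain Kc where "(Kc,p,e) \<in> c" "Kc \<subseteq> K" using dle_MII_mem[OF assms(1-3) K(1)] by blast
  then show ?thesis using K(2) placed_def by blast
qed

lemma dle_refl:
  assumes "c \<in> MII T"
  shows "dle c c"
proof -
  obtain M x y where "c = dpclass (M,x,y)" using MII_E assms by blast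
  then show ?thesis unfolding dle_def using dpclass_self by blast
qed

lemma dle_trans:
  assumes "c1 \<in> MII T" "c2 \<in> MII T" "c3 \<in> MII T" "dle c1 c2" "dle c2 c3"
  shows "dle c1 c3"
proof -
  obtain M x y where c3: "c3 = dpclass (M,x,y)" using MII_E assms(3) by blast
  have "(M,x,y) \<in> c3" using c3 by simp
  then obtain K2 where K2: "(K2,x,y) \<in> c2" "K2 \<subseteq> M" using dle_MII_mem[OF assms(2,3,5)] by blast
  then obtain K1 where "(K1,x,y) \<in> c1" "K1 \<subseteq> K2" using dle_MII_mem[OF assms(1,2,4)] by blast
  then show ?thesis unfolding dle_def using K2(2) \<open>(M,x,y) \<in> c3\<close> by blast
qed

lemma dmult_dle_left_mono:
  assumes T: "is_tiling T" and a: "a \<in> MII T" and b: "b \<in> MII T" and c: "c \<in> MII T"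
    and ab: "dle a b" and comp: "composable T b c"
  shows "composable T a c \<and> dle (dmult T a c) (dmult T b c)"
proof -
  obtain N x y where bN: "b = dpclass (N,x,y)" using MII_E b by blast
  have "(N,x,y) \<in> b" using bN by simp
  then obtain M where M: "(M,x,y) \<in> a" "M \<subseteq> N" using dle_MII_mem[OF a b ab] by blast
  have aM: "a = dpclass (M,x,y)" using MII_eq_dpclass a M by blast
  obtain C v w where cC: "c = dpclass (C,v,w)" using MII_E c by blast
  note comp_iff = composable_dpclass_iff[OF T a[unfolded aM] c[unfolded cC]]
    composable_dpclass_iff[OF T b[unfolded bN] c[unfolded cC]]
  obtain d e where de: "tile_tr d v = y" "pat_tr e (N \<union> pat_tr d C) \<subseteq> T"
    using comp comp_iff(2) bN cC by blast
  have "pat_tr e (M \<union> pat_tr d C) \<subseteq> T"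
    using de(2) M(2) pat_tr_mono[of "M \<union> pat_tr d C" "N \<union> pat_tr d C" e] by blast
  then have comp_a: "composable T a c" using comp_iff(1) de(1) aM cC by blast
  have ac: "dmult T a c = dpclass (M \<union> pat_tr d C, x, tile_tr d w)"
    using dmult_dpclass[OF T a[unfolded aM] c[unfolded cC] _ de(1)] comp_a aM cC by simp
  have bc: "dmult T b c = dpclass (N \<union> pat_tr d C, x, tile_tr d w)"
    using dmult_dpclass[OF T b[unfolded bN] c[unfolded cC] _ de(1)] comp bN cC by simp
  have "dle (dmult T a c) (dmult T b c)"
    unfolding ac bc dle_dpclass_iff using M(2) by (intro exI[of _ 0]) auto
  then show ?thesis using comp_a by blast
qed

lemma dmult_within:
  assumes T: "is_tiling T" and c: "c \<in> MII T" and d: "d \<in> MII T"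
    and K: "(K,p,e) \<in> c" and Kd: "(Kd,e,e') \<in> d" "Kd \<subseteq> K"
  shows "composable T c d \<and> dmult T c d = dpclass (K,p,e')"
proof -
  have cK: "c = dpclass (K,p,e)" "translated_pattern T K" using MII_eq_dpclass[OF c K] by auto
  have dK: "d = dpclass (Kd,e,e')" using MII_eq_dpclass[OF d Kd(1)] by blast
  obtain a where a: "pat_tr a K \<subseteq> T" using cK(2) translated_pattern_def by blast
  have un: "K \<union> pat_tr 0 Kd = K" using Kd(2) by auto
  have comp: "composable T c d"
    using composable_dpclass_iff[OF T c[unfolded cK(1)] d[unfolded dK]] cK dK a un by (metis tile_tr_0)
  moreover have "dmult T c d = dpclass (K,p,e')"
    using dmult_dpclass[OF T c[unfolded cK(1)] d[unfolded dK], of 0] comp cK dK un by simp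
  ultimately show ?thesis by blast
qed

lemma placed_dmult:
  assumes T: "is_tiling T" and c: "c \<in> MII T" and d: "d \<in> MII T" and comp: "composable T c d"
    and pc: "placed S p c e" and pd: "placed S e d e'"
  shows "placed S p (dmult T c d) e'"
proof -
  obtain Kc where Kc: "(Kc,p,e) \<in> c" "Kc \<subseteq> S" using pc placed_def by blast
  obtain Kd where Kd: "(Kd,e,e') \<in> d" "Kd \<subseteq> S" using pd placed_def by blast
  have cK: "c = dpclass (Kc,p,e)" using MII_eq_dpclass[OF c Kc(1)] by blast
  have dK: "d = dpclass (Kd,e,e')" using MII_eq_dpclass[OF d Kd(1)] by blast
  have "dmult T c d = dpclass (Kc \<union> Kd, p, e')"
    using dmult_dpclass[OF T c[unfolded cK] d[unfolded dK], of 0] comp cK dK by simp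
  then show ?thesis unfolding placed_def using Kc(2) Kd(2) dpclass_self by blast
qed

lemma placed_dmult_right:
  assumes T: "is_tiling T" and c: "c \<in> MII T" and d: "d \<in> MII T" and comp: "composable T c d"
    and pcd: "placed S p (dmult T c d) e'" and pc: "placed S p c e"
  shows "placed S e d e'"
proof -
  obtain Kc where Kc: "(Kc,p,e) \<in> c" using pc placed_def by blast
  have cK: "c = dpclass (Kc,p,e)" "translated_pattern T Kc" "p \<in> Kc"
    using MII_eq_dpclass[OF c Kc] by auto
  obtain D y z where dD: "d = dpclass (D,y,z)" using MII_E[OF d] by blast
  obtain b where b: "tile_tr b y = e"
    using composable_dpclass_iff[OF T c[unfolded cK(1)] d[unfolded dD]] comp cK dD by blast
  have "dmult T c d = dpclass (Kc \<union> pat_tr b D, p, tile_tr b z)"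
    using dmult_dpclass[OF T c[unfolded cK(1)] d[unfolded dD] _ b] comp cK dD by simp
  moreover obtain K where K: "(K,p,e') \<in> dmult T c d" "K \<subseteq> S" using pcd placed_def by blast
  ultimately obtain a where a: "K = pat_tr a (Kc \<union> pat_tr b D)" "p = tile_tr a p"
    "e' = tile_tr a (tile_tr b z)"
    using mem_dpclass by blast
  have "a = 0" using a(2) tile_tr_eq_self_imp_0 translated_pattern_proper_tile[OF T cK(2,3)] by metis
  then have "pat_tr b D \<subseteq> S" "e' = tile_tr b z" using a K(2) by (auto simp: pat_tr_Un)
  moreover have "(pat_tr b D, e, tile_tr b z) \<in> d" unfolding dD mem_dpclass using b by blast
  ultimately show ?thesis unfolding placed_def by blast
qed

lemma requiv_placed_same_end:
  assumes T: "is_tiling T" and c: "c \<in> MII T" and c': "c' \<in> MII T"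
    and pc: "placed S p c e" and pc': "placed S p c' e'"
    and r: "requiv T (ptclass (S,p)) c c'"
  shows "e = e'"
proof -
  obtain v where v: "is_unit T v" "occ v (ptclass (S,p))" "composable T v c" "composable T v c'"
    "dmult T v c = dmult T v c'" using r unfolding requiv_def by blast
  have vM: "v \<in> MII T" using v(1) is_unit_def by blast
  have pv: "placed S p v p" using v(2) occ_ptclass_iff[OF vM] by blast
  have "placed S p (dmult T v c) e" "placed S p (dmult T v c) e'"
    using placed_dmult[OF T vM c v(3) pv pc] placed_dmult[OF T vM c' v(4) pv pc'] v(5) by simp_all
  then show ?thesis using placed_end_unique[OF T dmult_MII[OF T vM c v(3)]] by blast
qed

lemma requiv_if_placed_in_unit:
  assumes T: "is_tiling T" and c: "c \<in> MII T" and c': "c' \<in> MII T" and v: "v \<in> MII T"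
    and Kv: "(Kv,p,p) \<in> v" "Kv \<subseteq> S"
    and pc: "placed Kv p c e" and pc': "placed Kv p c' e"
  shows "requiv T (ptclass (S,p)) c c'"
proof -
  obtain Kc where Kc: "(Kc,p,e) \<in> c" "Kc \<subseteq> Kv" using pc placed_def by metis
  obtain Kc' where Kc': "(Kc',p,e) \<in> c'" "Kc' \<subseteq> Kv" using pc' placed_def by metis
  have "v = dpclass (Kv,p,p)" using MII_eq_dpclass[OF v Kv(1)] by blast
  then have "is_unit T v" using v is_unit_dpclass_iff[of Kv p p T] by simp
  moreover have "occ v (ptclass (S,p))" using occ_ptclass_iff[OF v] Kv placed_def by blast
  ultimately show ?thesis unfolding requiv_def
    using dmult_within[OF T v c Kv(1) Kc] dmult_within[OF T v c' Kv(1) Kc'] by auto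
qed

lemma requiv_refl:
  assumes T: "is_tiling T" and c: "c \<in> MII T" and pc: "placed S p c e"
  shows "requiv T (ptclass (S,p)) c c"
proof -
  obtain K where K: "(K,p,e) \<in> c" "K \<subseteq> S" using pc placed_def by blast
  have "dpclass (K,p,p) \<in> MII T" using MII_eq_dpclass[OF c K(1)] by (simp add: dpclass_in_MII_iff)
  moreover have "placed K p c e" using K unfolding placed_def by blast
  ultimately show ?thesis using requiv_if_placed_in_unit[OF T c c _ _ K(2)] by simp
qed

lemma act_ptclass:
  assumes T: "is_tiling T" and c: "c \<in> MII T" and pc: "placed S p c e"
  shows "act (ptclass (S,p)) c = ptclass (S,e)"
  unfolding act_def
proof (rule the_equality)
  show "\<exists>S' M x y. (S',x) \<in> ptclass (S,p) \<and> (M,x,y) \<in> c \<and> M \<subseteq> S' \<and> ptclass (S,e) = ptclass (S',y)"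
    using pc unfolding placed_def by (metis ptclass_self)
next
  fix \<omega> assume "\<exists>S' M x y. (S',x) \<in> ptclass (S,p) \<and> (M,x,y) \<in> c \<and> M \<subseteq> S' \<and> \<omega> = ptclass (S',y)"
  then obtain S' M x y where h: "(S',x) \<in> ptclass (S,p)" "(M,x,y) \<in> c" "M \<subseteq> S'" "\<omega> = ptclass (S',y)"
    by blast
  obtain a where a: "S' = pat_tr a S" "x = tile_tr a p" using h(1) mem_ptclass by blast
  have "placed S' x c y" using h unfolding placed_def by blast
  then have "placed S p c (tile_tr (-a) y)" using placed_pat_tr[OF c, of S' x y "-a"] a by simp
  then have "tile_tr (-a) y = e" using placed_end_unique[OF T c pc] by blast
  then have "y = tile_tr a e" by (metis tile_tr_cancel(2))
  then show "\<omega> = ptclass (S,e)" using h(4) a by simp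
qed

lemma ball_subset_if_less_rad:
  assumes T: "is_tiling T" and u: "u \<in> MII T" and r: "r < rad u" and K: "(K,x,y) \<in> u" and q: "q \<in> fst x"
  shows "ball q r \<subseteq> \<Union>(fst ` K)"
proof -
  define A where "A = {r. 0 \<le> r \<and> (\<forall>(M,x,y)\<in>u. \<forall>p\<in>fst x. ball p r \<subseteq> \<Union>(fst ` M))}"
  have K_pat: "translated_pattern T K" "x \<in> K" using MII_eq_dpclass[OF u K] by auto
  have "bounded (\<Union>(fst ` K))"
    using K_pat translated_pattern_proper_tile[OF T K_pat(1)]
    by (auto simp: translated_pattern_def proper_tile_def intro: bounded_Union)
  then obtain B where B: "\<forall>z\<in>\<Union>(fst ` K). dist q z \<le> B" using bounded_any_center by metis
  have B_nonneg: "0 \<le> B" using B q K_pat(2) by (metis UN_I dist_self)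
  have "bdd_above A"
  proof (rule bdd_aboveI[of _ B])
    fix s assume "s \<in> A"
    then have "ball q s \<subseteq> \<Union>(fst ` K)" "0 \<le> s" using K q unfolding A_def by fastforce+
    then have "ball q s \<subseteq> cball q B" using B by (auto simp: subset_eq)
    then show "s \<le> B" using \<open>0 \<le> s\<close> ball_subset_cball_iff[of q s q B] B_nonneg by (cases "s = 0") auto
  qed
  moreover have "0 \<in> A" unfolding A_def by auto
  ultimately obtain s where s: "s \<in> A" "r < s"
    using less_cSup_iff[of A r] r unfolding rad_def A_def[symmetric] by blast
  then have "ball q s \<subseteq> \<Union>(fst ` K)" using K q unfolding A_def by fastforce
  moreover have "ball q r \<subseteq> ball q s" using s(2) by (intro subset_ball) simp
  ultimately show ?thesis by blast
qed

section \<open>The hull and approximating sequences\<close>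

text \<open>By Baire's theorem every pattern covering the \<open>r\<close>-neighbourhood of the pointed tile contains
  each tile whose interior meets that neighbourhood; hence this patch is \<open>M\<^sub>r\<close>.\<close>

definition Mr_patch :: "real \<Rightarrow> ('n::finite,'l) tile set \<Rightarrow> ('n,'l) tile \<Rightarrow> ('n,'l) tile set" where
  "Mr_patch r S p = insert p {t\<in>S. interior (fst t) \<inter> (\<Union>q\<in>fst p. ball q r) \<noteq> {}}"

lemma Union_ball_tile_tr: "(\<Union>q\<in>fst (tile_tr a p). ball q r) = (\<lambda>x. a + x) ` (\<Union>q\<in>fst p. ball q r)"
proof -
  have "ball (a + q) r = (\<lambda>x. a + x) ` ball q r" for q
    by (rule ball_translation)
  then have "(\<Union>q\<in>fst (tile_tr a p). ball q r) = (\<Union>q\<in>fst p. (\<lambda>x. a + x) ` ball q r)"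
    by (simp add: fst_tile_tr)
  also have "\<dots> = (\<lambda>x. a + x) ` (\<Union>q\<in>fst p. ball q r)" by (rule image_UN[symmetric])
  finally show ?thesis .
qed

lemma Mr_patch_pat_tr: "Mr_patch r (pat_tr a S) (tile_tr a p) = pat_tr a (Mr_patch r S p)"
proof (rule set_eqI)
  have meets: "interior (fst (tile_tr a t)) \<inter> (\<Union>q\<in>fst (tile_tr a p). ball q r) \<noteq> {} \<longleftrightarrow>
      interior (fst t) \<inter> (\<Union>q\<in>fst p. ball q r) \<noteq> {}" for t
    unfolding interior_fst_tile_tr Union_ball_tile_tr by auto
  fix t
  have "t \<in> Mr_patch r (pat_tr a S) (tile_tr a p) \<longleftrightarrow> t = tile_tr a p \<or> (t \<in> pat_tr a S \<and>
      interior (fst (tile_tr a (tile_tr (-a) t))) \<inter> (\<Union>q\<in>fst (tile_tr a p). ball q r) \<noteq> {})"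
    unfolding Mr_patch_def by simp
  also have "\<dots> \<longleftrightarrow> tile_tr (-a) t = p \<or> (tile_tr (-a) t \<in> S \<and>
      interior (fst (tile_tr (-a) t)) \<inter> (\<Union>q\<in>fst p. ball q r) \<noteq> {})"
    unfolding meets mem_pat_tr by auto
  also have "\<dots> \<longleftrightarrow> t \<in> pat_tr a (Mr_patch r S p)" unfolding mem_pat_tr Mr_patch_def by simp
  finally show "t \<in> Mr_patch r (pat_tr a S) (tile_tr a p) \<longleftrightarrow> t \<in> pat_tr a (Mr_patch r S p)" .
qed

lemma Mr_patch_covers:
  assumes S: "is_tiling S" and q: "q \<in> fst p"
  shows "ball q r \<subseteq> \<Union>(fst ` Mr_patch r S p)"
proof
  fix z assume z: "z \<in> ball q r"
  obtain t where t: "t \<in> S" "z \<in> fst t" using tiling_covers[OF S] by blast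
  then have "z \<in> closure (interior (fst t))" using tiling_tile(4)[OF S t(1)] by simp
  then have "interior (fst t) \<inter> ball q r \<noteq> {}"
    using z open_Int_closure_eq_empty[of "ball q r" "interior (fst t)"] by auto
  then have "t \<in> Mr_patch r S p" unfolding Mr_patch_def using t q by blast
  then show "z \<in> \<Union>(fst ` Mr_patch r S p)" using t by blast
qed

lemma Mr_patch_least:
  assumes S: "is_tiling S" and P: "P \<subseteq> S" "p \<in> P" and cov: "\<forall>q\<in>fst p. ball q r \<subseteq> \<Union>(fst ` P)"
  shows "Mr_patch r S p \<subseteq> P"
proof -
  have "t \<in> P" if "t \<in> S" "interior (fst t) \<inter> (\<Union>q\<in>fst p. ball q r) \<noteq> {}" for t
    using tiling_mem_if_interior_meets_covered[OF S that(1) P(1) _ _ that(2)] cov by blast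
  then show ?thesis unfolding Mr_patch_def using P(2) by blast
qed

lemma Mr_rep_eq:
  assumes S: "is_tiling S" and p: "p \<in> S"
  shows "Mr_rep r S p = Mr_patch r S p"
proof -
  let ?Q = "\<lambda>P. P \<subseteq> S \<and> p \<in> P \<and> (\<forall>q\<in>fst p. ball q r \<subseteq> \<Union>(fst ` P))"
  have Q: "?Q (Mr_patch r S p)" using p Mr_patch_covers[OF S] unfolding Mr_patch_def by blast
  have least: "\<forall>P'. ?Q P' \<longrightarrow> Mr_patch r S p \<subseteq> P'" using Mr_patch_least[OF S] by blast
  have "Mr_rep r S p = (THE P. ?Q P \<and> (\<forall>P'. ?Q P' \<longrightarrow> P \<subseteq> P'))"
    unfolding Mr_rep_def by (simp only: conj_assoc)
  also have "\<dots> = Mr_patch r S p"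
  proof (rule the_equality)
    show "?Q (Mr_patch r S p) \<and> (\<forall>P'. ?Q P' \<longrightarrow> Mr_patch r S p \<subseteq> P')" using Q least by (rule conjI)
  next
    fix P assume "?Q P \<and> (\<forall>P'. ?Q P' \<longrightarrow> P \<subseteq> P')"
    then show "P = Mr_patch r S p" using Q least by (meson subset_antisym)
  qed
  finally show ?thesis .
qed

lemma Mr_ptclass:
  assumes S: "is_tiling S" and p: "p \<in> S"
  shows "Mr r (ptclass (S,p)) = ptclass (Mr_patch r S p, p)"
proof -
  define sp where "sp = (SOME sp. sp \<in> ptclass (S,p))"
  have "sp \<in> ptclass (S,p)" unfolding sp_def by (rule someI[of _ "(S,p)"]) simp
  then obtain a where a: "sp = (pat_tr a S, tile_tr a p)" by (cases sp) (auto simp: mem_ptclass)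
  have "Mr_rep r (fst sp) (snd sp) = pat_tr a (Mr_patch r S p)"
    using a Mr_rep_eq[OF is_tiling_pat_tr[OF S]] p Mr_patch_pat_tr by simp
  then show ?thesis unfolding Mr_def Let_def sp_def[symmetric] using a by simp
qed

lemma Mr_patch_local:
  assumes S: "is_tiling S" and W: "W \<subseteq> S" "p \<in> W" and cov: "\<forall>q\<in>fst p. ball q r \<subseteq> \<Union>(fst ` W)"
  shows "Mr_patch r S p = Mr_patch r W p"
proof -
  have "t \<in> W" if "t \<in> S" "interior (fst t) \<inter> (\<Union>q\<in>fst p. ball q r) \<noteq> {}" for t
    using tiling_mem_if_interior_meets_covered[OF S that(1) W(1) _ _ that(2)] cov by blast
  then show ?thesis unfolding Mr_patch_def using W by blast
qed

lemma Mr_patch_superset: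
  assumes S: "is_tiling S" and K: "K \<subseteq> S" and q: "q \<in> fst p"
    and R: "\<forall>z\<in>\<Union>(fst ` K). dist q z \<le> R" and r: "R < r"
  shows "K \<subseteq> Mr_patch r S p"
proof
  fix t assume t: "t \<in> K"
  obtain z where z: "z \<in> interior (fst t)" using tiling_interior_nonempty[OF S] K t by blast
  then have "dist q z \<le> R" using R t interior_subset by blast
  then have "z \<in> ball q r" using r by simp
  then have "interior (fst t) \<inter> (\<Union>q\<in>fst p. ball q r) \<noteq> {}" using z q by blast
  then show "t \<in> Mr_patch r S p" unfolding Mr_patch_def using t K by blast
qed

lemma approx_seqD:
  assumes "approx_seq T A v"
  shows "\<And>n. v n \<in> A" "\<And>n. is_unit T (v n)" "\<And>k. composable T (iprod T v k) (v (Suc k))"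
    "filterlim (\<lambda>n. rad (v n)) at_top sequentially"
  using assms unfolding approx_seq_def by blast+

lemma approx_seq_mono: "approx_seq T A v \<Longrightarrow> A \<subseteq> B \<Longrightarrow> approx_seq T B v"
  unfolding approx_seq_def by blast

lemma approx_seq_reps:
  assumes T: "is_tiling T" and v: "approx_seq T (MII T) v" and x0: "(M0,x0,x0) \<in> v 0"
  defines "V \<equiv> \<lambda>n. THE K. (K,x0,x0) \<in> v n"
  shows "(V k, x0, x0) \<in> v k \<and> iprod T v k = dpclass (\<Union>n\<le>k. V n, x0, x0) \<and>
    translated_pattern T (\<Union>n\<le>k. V n)"
proof -
  note vD = approx_seqD[OF v]
  have V_eq: "V n = K" if K: "(K,x0,x0) \<in> v n" for n K
    unfolding V_def
  proof (rule the_equality)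
    fix K' assume "(K',x0,x0) \<in> v n"
    then show "K' = K" using MII_rep_unique[OF T vD(1) K] by blast
  qed (rule K)
  show ?thesis
  proof (induction k)
    case 0
    have "V 0 = M0" using V_eq x0 by blast
    then show ?case using x0 MII_eq_dpclass[OF vD(1) x0] by simp
  next
    case (Suc k)
    let ?P = "\<Union>n\<le>k. V n"
    have x0P: "x0 \<in> ?P" using Suc MII_eq_dpclass[OF vD(1)] by blast
    have P: "dpclass (?P, x0, x0) \<in> MII T" using Suc x0P by (simp add: dpclass_in_MII_iff)
    obtain M x y where M: "v (Suc k) = dpclass (M,x,y)" "translated_pattern T M"
      using MII_E[OF vD(1)[of "Suc k"]] by metis
    have "y = x" using is_unit_dpclass_iff[of M x y T] vD(1,2)[of "Suc k"] M(1) by simp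
    then have Mx: "v (Suc k) = dpclass (M,x,x)" using M(1) by simp
    have vM: "dpclass (M,x,x) \<in> MII T" using Mx vD(1)[of "Suc k"] by simp
    have comp: "composable T (dpclass (?P, x0, x0)) (dpclass (M,x,x))"
      using vD(3)[of k] Suc Mx by simp
    obtain b a where b: "tile_tr b x = x0" "pat_tr a (?P \<union> pat_tr b M) \<subseteq> T"
      using composable_dpclass_iff[OF T P vM] comp by blast
    have "(pat_tr b M, x0, x0) \<in> v (Suc k)" unfolding Mx mem_dpclass using b(1) by blast
    then have V: "(V (Suc k), x0, x0) \<in> v (Suc k)" "V (Suc k) = pat_tr b M" using V_eq by auto
    have "iprod T v (Suc k) = dpclass (?P \<union> pat_tr b M, x0, x0)"
      using dmult_dpclass[OF T P vM comp b(1)] Suc Mx b(1) by simp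
    moreover have "(\<Union>n\<le>Suc k. V n) = ?P \<union> pat_tr b M"
      using V(2) by (simp add: atMost_Suc Un_commute)
    moreover have "translated_pattern T (?P \<union> pat_tr b M)"
      using Suc b M(2) unfolding translated_pattern_def by auto
    ultimately show ?case using V(1) by simp
  qed
qed

locale approx_reps =
  fixes T :: "('n::finite,'l) tile set" and v :: "nat \<Rightarrow> ('n,'l) dpat set"
    and x0 :: "('n,'l) tile" and V :: "nat \<Rightarrow> ('n,'l) tile set"
  assumes tiling: "is_tiling T" and approx: "approx_seq T (MII T) v"
    and rep: "\<And>n. (V n, x0, x0) \<in> v n"
    and partial_unions: "\<And>k. translated_pattern T (\<Union>n\<le>k. V n)"
begin

definition limit_tiling :: "('n,'l) tile set" where
  "limit_tiling = (\<Union>n. V n)"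

lemma v_MII: "v n \<in> MII T"
  using approx_seqD(1)[OF approx] by blast

lemma V_subset: "V n \<subseteq> limit_tiling"
  unfolding limit_tiling_def by blast

lemma x0_in_limit: "x0 \<in> limit_tiling"
  using MII_eq_dpclass[OF v_MII rep] V_subset by blast

lemma eventually_ball_subset: "\<forall>\<^sub>F n in sequentially. \<forall>q\<in>fst x0. ball q R \<subseteq> \<Union>(fst ` V n)"
proof -
  have "\<forall>\<^sub>F n in sequentially. R + 1 \<le> rad (v n)"
    using approx_seqD(4)[OF approx] unfolding filterlim_at_top by blast
  then show ?thesis
    by (rule eventually_mono) (use ball_subset_if_less_rad[OF tiling v_MII _ rep] in force)
qed

lemma limit_covers: "\<Union>(fst ` limit_tiling) = UNIV"
proof -
  obtain q0 where q0: "q0 \<in> fst x0"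
    using translated_pattern_proper_tile[OF tiling] MII_eq_dpclass[OF v_MII rep] proper_tile_def by blast
  have "z \<in> \<Union>(fst ` limit_tiling)" for z
  proof -
    obtain n where "\<forall>q\<in>fst x0. ball q (dist q0 z + 1) \<subseteq> \<Union>(fst ` V n)"
      using eventually_happens'[OF sequentially_bot eventually_ball_subset] by blast
    then have "z \<in> \<Union>(fst ` V n)" using q0 by force
    then show ?thesis using V_subset by blast
  qed
  then show ?thesis by blast
qed

lemma is_tiling_limit: "is_tiling limit_tiling"
proof (rule is_tiling_if_pairs_occur[OF tiling _ limit_covers])
  have "finite (V n)" for n
    using partial_unions[of n] unfolding translated_pattern_def by (meson atMost_iff finite_subset UN_upper order_refl)
  then show "countable limit_tiling" unfolding limit_tiling_def by (simp add: countable_finite)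
next
  fix t t' assume "t \<in> limit_tiling" "t' \<in> limit_tiling"
  then obtain i j where "t \<in> V i" "t' \<in> V j" unfolding limit_tiling_def by blast
  then have "t \<in> (\<Union>n\<le>max i j. V n)" "t' \<in> (\<Union>n\<le>max i j. V n)" by auto
  moreover obtain a where "pat_tr a (\<Union>n\<le>max i j. V n) \<subseteq> T"
    using partial_unions unfolding translated_pattern_def by blast
  ultimately show "\<exists>a. tile_tr a t \<in> T \<and> tile_tr a t' \<in> T" by (metis tile_tr_in_pat_tr subsetD)
qed

lemma finite_subset_eventually:
  assumes F: "finite F" "F \<subseteq> limit_tiling"
  shows "\<forall>\<^sub>F n in sequentially. F \<subseteq> V n"
proof -
  obtain q where q: "q \<in> fst x0" using tiling_tile(3)[OF is_tiling_limit x0_in_limit] by blast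
  have "bounded (\<Union>(fst ` F))"
    using F tiling_tile(2)[OF is_tiling_limit] by (intro bounded_Union) auto
  then obtain B where B: "\<Union>(fst ` F) \<subseteq> ball q B" using bounded_subset_ballD by blast
  show ?thesis using eventually_ball_subset[of B]
  proof (rule eventually_mono)
    fix n assume n: "\<forall>q\<in>fst x0. ball q B \<subseteq> \<Union>(fst ` V n)"
    then have "fst t \<subseteq> \<Union>(fst ` V n)" if "t \<in> F" for t
      using q B that by blast
    then show "F \<subseteq> V n"
      using tiling_mem_if_covered[OF is_tiling_limit _ V_subset] F(2) by blast
  qed
qed

lemma occ_limit: "occ (v n) (ptclass (limit_tiling, x0))"
  using occ_ptclass_iff[OF v_MII] rep V_subset unfolding placed_def by blast

lemma limit_unique:
  assumes "is_ptclass \<omega>" "\<forall>n. occ (v n) \<omega>"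
  shows "\<omega> = ptclass (limit_tiling, x0)"
proof -
  obtain S p where S: "is_tiling S" "p \<in> S" "\<omega> = ptclass (S,p)" using assms(1) is_ptclass_def by blast
  obtain K where "(K,p,p) \<in> v 0" "K \<subseteq> S" using assms(2) occ_ptclass_iff[OF v_MII] S(3) placed_def by metis
  then obtain a where a: "p = tile_tr a x0" using MII_eq_dpclass[OF v_MII rep] mem_dpclass by metis
  define S' where "S' = pat_tr (-a) S"
  have \<omega>: "\<omega> = ptclass (S', x0)" unfolding S'_def S(3) a using ptclass_tr[of "-a" S "tile_tr a x0"] by simp
  have "V n \<subseteq> S'" for n
  proof -
    have "placed S' x0 (v n) x0" using assms(2) occ_ptclass_iff[OF v_MII] \<omega> by blast
    then show ?thesis using MII_rep_unique[OF tiling v_MII rep] unfolding placed_def by blast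
  qed
  then have "limit_tiling \<subseteq> S'" unfolding limit_tiling_def by blast
  then have "limit_tiling = S'"
    using tiling_eq_if_subset_covers[OF is_tiling_pat_tr[OF S(1)] _ limit_covers] S'_def by blast
  then show ?thesis using \<omega> by simp
qed

lemma slim_eq: "slim v = ptclass (limit_tiling, x0)"
  unfolding slim_def
proof (rule the_equality)
  show "is_ptclass (ptclass (limit_tiling, x0)) \<and> (\<forall>n. occ (v n) (ptclass (limit_tiling, x0)))"
    using is_tiling_limit x0_in_limit occ_limit unfolding is_ptclass_def by blast
qed (use limit_unique in blast)

text \<open>Around \<open>x0\<close>, the \<open>r\<close>-patch of the limit is that of \<open>V n\<close> for \<open>r < rad (v n)\<close>, which is a
  translate of an \<open>r\<close>-patch of \<open>T\<close>.\<close>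

lemma limit_in_Omega: "ptclass (limit_tiling, x0) \<in> Omega T"
proof -
  have "\<exists>x\<in>T. Mr r (ptclass (limit_tiling, x0)) = Mr r (ptclass (T,x))" for r
  proof -
    have "\<forall>\<^sub>F n in sequentially. r < rad (v n)"
      using approx_seqD(4)[OF approx] unfolding filterlim_at_top_dense by blast
    then obtain n where n: "r < rad (v n)" using eventually_happens'[OF sequentially_bot] by blast
    obtain M x y where M: "v n = dpclass (M,x,y)" "is_pattern T M" "x \<in> M"
      using v_MII[of n] unfolding MII_def by blast
    obtain a where a: "V n = pat_tr a M" "x0 = tile_tr a x" using rep[of n] M(1) mem_dpclass by blast
    have MT: "M \<subseteq> T" "x \<in> T" using M(2,3) unfolding is_pattern_def by blast+
    have "Mr r (ptclass (limit_tiling, x0)) = ptclass (Mr_patch r limit_tiling x0, x0)"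
      using Mr_ptclass[OF is_tiling_limit x0_in_limit] .
    also have "Mr_patch r limit_tiling x0 = Mr_patch r (V n) x0"
      using Mr_patch_local[OF is_tiling_limit V_subset] MII_eq_dpclass[OF v_MII rep]
        ball_subset_if_less_rad[OF tiling v_MII n rep] by blast
    also have "\<dots> = pat_tr a (Mr_patch r M x)" unfolding a by (rule Mr_patch_pat_tr)
    also have "ptclass (pat_tr a (Mr_patch r M x), x0) = ptclass (Mr_patch r M x, x)" using a by simp
    also have "Mr_patch r M x = Mr_patch r T x"
      using Mr_patch_local[OF tiling MT(1) M(3)] ball_subset_if_less_rad[OF tiling v_MII n] M(1)
        dpclass_self by metis
    also have "ptclass (Mr_patch r T x, x) = Mr r (ptclass (T,x))" using Mr_ptclass[OF tiling MT(2)] by simp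
    finally show ?thesis using MT(2) by blast
  qed
  moreover have "is_ptclass (ptclass (limit_tiling, x0))"
    using is_tiling_limit x0_in_limit unfolding is_ptclass_def by blast
  ultimately show ?thesis unfolding Omega_def by blast
qed

end

locale approx_limit =
  fixes T :: "('n::finite,'l) tile set" and v :: "nat \<Rightarrow> ('n,'l) dpat set"
    and S :: "('n,'l) tile set" and x0 :: "('n,'l) tile" and V :: "nat \<Rightarrow> ('n,'l) tile set"
  assumes limit_tiling: "is_tiling S" and base_tile: "x0 \<in> S"
    and rep: "\<And>n. (V n, x0, x0) \<in> v n" and rep_subset: "\<And>n. V n \<subseteq> S"
    and slim_eq: "slim v = ptclass (S,x0)"
    and unique: "\<And>\<omega>. is_ptclass \<omega> \<Longrightarrow> \<forall>n. occ (v n) \<omega> \<Longrightarrow> \<omega> = ptclass (S,x0)"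
    and in_Omega: "ptclass (S,x0) \<in> Omega T"
    and finite_subset_eventually: "\<And>F. finite F \<Longrightarrow> F \<subseteq> S \<Longrightarrow> \<forall>\<^sub>F n in sequentially. F \<subseteq> V n"

lemma (in approx_reps) approx_limit: "approx_limit T v limit_tiling x0 V"
  by (unfold_locales; (rule is_tiling_limit x0_in_limit rep V_subset slim_eq limit_in_Omega)?)
    (simp_all add: limit_unique finite_subset_eventually)

lemma approx_limit_exists:
  assumes T: "is_tiling T" and v: "approx_seq T (MII T) v"
  shows "\<exists>S x0 V. approx_limit T v S x0 V"
proof -
  obtain M x y where M: "v 0 = dpclass (M,x,y)" using MII_E[OF approx_seqD(1)[OF v, of 0]] by metis
  then have "y = x" using is_unit_dpclass_iff[of M x y T] approx_seqD(1,2)[OF v, of 0] by simp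
  then have "(M,x,x) \<in> v 0" using M by simp
  note reps = approx_seq_reps[OF T v this]
  interpret approx_reps T v x "\<lambda>n. THE K. (K,x,x) \<in> v n"
    using T v reps by unfold_locales simp_all
  show ?thesis using approx_limit by blast
qed

section \<open>The groupoids of classes \<open>[\<omega>,c]\<close>\<close>

lemma rcls_mem:
  "g \<in> rcls T A \<omega> c \<longleftrightarrow> (\<exists>d. g = (\<omega>,d) \<and> d \<in> A \<and> occ (Lu T d) \<omega> \<and> requiv T \<omega> c d)"
  unfolding rcls_def by blast

lemma rcls_refl:
  assumes T: "is_tiling T" and A: "A \<subseteq> MII T" and c: "c \<in> A" and pc: "placed S p c e"
  shows "(ptclass (S,p), c) \<in> rcls T A (ptclass (S,p)) c"
proof -
  have cM: "c \<in> MII T" using A c by blast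
  have "occ (Lu T c) (ptclass (S,p))" using occ_Lu_ptclass_iff[OF T cM] pc by blast
  then show ?thesis unfolding rcls_mem using requiv_refl[OF T cM pc] c by blast
qed

text \<open>Two arrows placed at the limit with the same end are covered by a late unit of the
  sequence, which witnesses their equivalence.\<close>

lemma rcls_approx_limit:
  assumes T: "is_tiling T" and A: "A \<subseteq> MII T" and lim: "approx_limit T v S x0 V"
    and vM: "\<And>n. v n \<in> MII T" and c: "c \<in> MII T" and pc: "placed S x0 c e"
  shows "rcls T A (ptclass (S,x0)) c = {(ptclass (S,x0), d) | d. d \<in> A \<and> placed S x0 d e}"
proof (intro set_eqI iffI)
  fix g assume "g \<in> rcls T A (ptclass (S,x0)) c"
  then obtain d where d: "g = (ptclass (S,x0),d)" "d \<in> A" "occ (Lu T d) (ptclass (S,x0))"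
    "requiv T (ptclass (S,x0)) c d"
    unfolding rcls_mem by blast
  have dM: "d \<in> MII T" using A d by blast
  obtain e' where e': "placed S x0 d e'" using occ_Lu_ptclass_iff[OF T dM] d by blast
  have "e = e'" using requiv_placed_same_end[OF T c dM pc e' d(4)] .
  then show "g \<in> {(ptclass (S,x0), d) | d. d \<in> A \<and> placed S x0 d e}" using d e' by blast
next
  fix g assume "g \<in> {(ptclass (S,x0), d) | d. d \<in> A \<and> placed S x0 d e}"
  then obtain d where d: "g = (ptclass (S,x0),d)" "d \<in> A" "placed S x0 d e" by blast
  have dM: "d \<in> MII T" using A d by blast
  obtain Kc where Kc: "(Kc,x0,e) \<in> c" "Kc \<subseteq> S" using pc placed_def by blast
  obtain Kd where Kd: "(Kd,x0,e) \<in> d" "Kd \<subseteq> S" using d(3) placed_def by blast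
  have "finite (Kc \<union> Kd)" using MII_eq_dpclass[OF c Kc(1)] MII_eq_dpclass[OF dM Kd(1)]
    unfolding translated_pattern_def by blast
  then obtain n where n: "Kc \<union> Kd \<subseteq> V n"
    using eventually_happens'[OF sequentially_bot approx_limit.finite_subset_eventually[OF lim]] Kc Kd by blast
  have "placed (V n) x0 c e" "placed (V n) x0 d e" using Kc Kd n unfolding placed_def by blast+
  then have "requiv T (ptclass (S,x0)) c d"
    using requiv_if_placed_in_unit[OF T c dM vM approx_limit.rep[OF lim] approx_limit.rep_subset[OF lim]] by blast
  moreover have "occ (Lu T d) (ptclass (S,x0))" using occ_Lu_ptclass_iff[OF T dM] d by blast
  ultimately show "g \<in> rcls T A (ptclass (S,x0)) c" unfolding rcls_mem using d by blast
qed

lemma composable_if_placed_in_limit: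
  assumes T: "is_tiling T" and lim: "approx_limit T v S x0 V" and vM: "\<And>n. v n \<in> MII T"
    and c: "c \<in> MII T" and d: "d \<in> MII T" and pc: "placed S p c e" and pd: "placed S e d e'"
  shows "composable T c d"
proof -
  obtain Kc where Kc: "(Kc,p,e) \<in> c" "Kc \<subseteq> S" using pc placed_def by blast
  obtain Kd where Kd: "(Kd,e,e') \<in> d" "Kd \<subseteq> S" using pd placed_def by blast
  have cK: "c = dpclass (Kc,p,e)" using MII_eq_dpclass[OF c Kc(1)] by blast
  have dK: "d = dpclass (Kd,e,e')" using MII_eq_dpclass[OF d Kd(1)] by blast
  have "finite (Kc \<union> Kd)" using MII_eq_dpclass[OF c Kc(1)] MII_eq_dpclass[OF d Kd(1)]
    unfolding translated_pattern_def by blast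
  then obtain n where n: "Kc \<union> Kd \<subseteq> V n"
    using eventually_happens'[OF sequentially_bot approx_limit.finite_subset_eventually[OF lim]] Kc Kd by blast
  have "translated_pattern T (V n)" using MII_eq_dpclass[OF vM approx_limit.rep[OF lim]] by blast
  then obtain a where a: "pat_tr a (V n) \<subseteq> T" unfolding translated_pattern_def by blast
  have "pat_tr a (Kc \<union> Kd) \<subseteq> pat_tr a (V n)" using n by (rule pat_tr_mono)
  then have "pat_tr a (Kc \<union> Kd) \<subseteq> T" using a by (rule order_trans)
  then have "pat_tr a (Kc \<union> pat_tr 0 Kd) \<subseteq> T" by simp
  then show ?thesis
    using composable_dpclass_iff[OF T c[unfolded cK] d[unfolded dK]] cK dK by (metis tile_tr_0)
qed

lemma rmult_rcls:
  assumes T: "is_tiling T" and A: "A \<subseteq> MII T" and B: "B \<subseteq> Omega T"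
    and lim: "approx_limit T v S x0 V" and vM: "\<And>n. v n \<in> MII T"
    and w1: "(ptclass (S,x0), c) \<in> Rdom T A B" and w2: "(act (ptclass (S,x0)) c, c') \<in> Rdom T A B"
    and comp: "composable T c c'"
  shows "rmult T A B (rcls T A (ptclass (S,x0)) c) (rcls T A (act (ptclass (S,x0)) c) c') =
           rcls T A (ptclass (S,x0)) (dmult T c c')"
proof -
  let ?\<omega> = "ptclass (S,x0)"
  let ?g = "rcls T A ?\<omega> c" and ?h = "rcls T A (act ?\<omega> c) c'"
  have cA: "c \<in> A" "c' \<in> A" using w1 w2 unfolding Rdom_def by auto
  have cM: "c \<in> MII T" "c' \<in> MII T" using cA A by blast+
  obtain e where e: "placed S x0 c e" using w1 occ_Lu_ptclass_iff[OF T cM(1)] unfolding Rdom_def by blast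
  have act: "act ?\<omega> c = ptclass (S,e)" using act_ptclass[OF T cM(1) e] .
  obtain e' where e': "placed S e c' e'"
    using w2 occ_Lu_ptclass_iff[OF T cM(2)] act unfolding Rdom_def by auto
  have "rcls T A \<omega>2 (dmult T c2 c2') = rcls T A ?\<omega> (dmult T c c')"
    if h: "(\<omega>2,c2) \<in> Rdom T A B" "(act \<omega>2 c2, c2') \<in> Rdom T A B" "composable T c2 c2'"
      "?g = rcls T A \<omega>2 c2" "?h = rcls T A (act \<omega>2 c2) c2'" for \<omega>2 c2 c2'
  proof -
    have c2A: "c2 \<in> A" "c2' \<in> A" using h(1,2) unfolding Rdom_def by auto
    have c2M: "c2 \<in> MII T" "c2' \<in> MII T" using c2A A by blast+
    have "\<omega>2 \<in> Omega T" using h(1) B unfolding Rdom_def by auto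
    then obtain S2 p2 where S2: "\<omega>2 = ptclass (S2,p2)" using Omega_E by metis
    obtain e2 where "placed S2 p2 c2 e2"
      using h(1) occ_Lu_ptclass_iff[OF T c2M(1)] S2 unfolding Rdom_def by auto
    then have "(\<omega>2, c2) \<in> ?g" using rcls_refl[OF T A c2A(1)] S2 h(4) by simp
    then have q: "\<omega>2 = ?\<omega>" "occ (Lu T c2) ?\<omega>" "requiv T ?\<omega> c c2" unfolding rcls_mem by auto
    obtain e3 where e3: "placed S x0 c2 e3" using q(2) occ_Lu_ptclass_iff[OF T c2M(1)] by blast
    have "e = e3" using requiv_placed_same_end[OF T cM(1) c2M(1) e e3 q(3)] .
    then have act2: "act \<omega>2 c2 = ptclass (S,e)" using act_ptclass[OF T c2M(1) e3] q(1) by simp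
    obtain e4 where e4: "placed S e c2' e4"
      using h(2) occ_Lu_ptclass_iff[OF T c2M(2)] act2 unfolding Rdom_def by auto
    have "(ptclass (S,e), c2') \<in> ?h" using rcls_refl[OF T A c2A(2) e4] h(5) act2 by simp
    then have "requiv T (ptclass (S,e)) c' c2'" using act unfolding rcls_mem by auto
    then have "e' = e4" using requiv_placed_same_end[OF T cM(2) c2M(2) e' e4] by blast
    then have "placed S x0 (dmult T c2 c2') e'"
      using placed_dmult[OF T c2M h(3) e3] e4 \<open>e = e3\<close> by simp
    then show ?thesis
      using q(1) rcls_approx_limit[OF T A lim vM dmult_MII[OF T c2M h(3)]]
        rcls_approx_limit[OF T A lim vM dmult_MII[OF T cM comp] placed_dmult[OF T cM comp e e']] by simp
  qed
  then show ?thesis unfolding rmult_def using w1 w2 comp by (intro the_equality) blast+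
qed

lemma hdist_less_exp_imp:
  assumes "hdist \<omega>1 \<omega>2 < ereal (exp (- R))"
  shows "\<exists>r>R. Mr r \<omega>1 = Mr r \<omega>2"
proof -
  define A where "A = {r. 0 \<le> r \<and> Mr r \<omega>1 = Mr r \<omega>2}"
  have hd: "hdist \<omega>1 \<omega>2 = (if A = {} then \<infinity> else if bdd_above A then ereal (exp (- Sup A)) else 0)"
    unfolding hdist_def A_def Let_def by simp
  have ne: "A \<noteq> {}" using assms hd by (cases "A = {}") auto
  show ?thesis
  proof (cases "bdd_above A")
    case True
    then have "R < Sup A" using assms hd ne by simp
    then obtain r where "r \<in> A" "R < r" using less_cSup_iff[OF ne True] by blast
    then show ?thesis unfolding A_def by blast
  next
    case False
    then obtain r where "r \<in> A" "R < r" unfolding bdd_above_def by (meson not_le)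
    then show ?thesis unfolding A_def by blast
  qed
qed

lemma Omega_open_UU:
  assumes T: "is_tiling T" and w: "w \<in> MII T"
  shows "Omega_open T (UU T w)"
  unfolding Omega_open_def
proof (intro conjI ballI)
  show "UU T w \<subseteq> Omega T" unfolding UU_def by blast
next
  fix \<omega>1 assume "\<omega>1 \<in> UU T w"
  then have \<omega>1: "\<omega>1 \<in> Omega T" "occ w \<omega>1" unfolding UU_def by auto
  obtain S1 p1 where S1: "is_tiling S1" "p1 \<in> S1" "\<omega>1 = ptclass (S1,p1)" using Omega_E[OF \<omega>1(1)] by blast
  obtain K where K: "(K,p1,p1) \<in> w" "K \<subseteq> S1" using \<omega>1(2) occ_ptclass_iff[OF w] S1(3) placed_def by metis
  have "finite K" using MII_eq_dpclass[OF w K(1)] translated_pattern_def by blast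
  then have "bounded (\<Union>(fst ` K))" using K(2) tiling_tile(2)[OF S1(1)] by (intro bounded_Union) auto
  obtain q where q: "q \<in> fst p1" using tiling_tile(3)[OF S1(1,2)] by blast
  obtain R where R: "\<forall>z\<in>\<Union>(fst ` K). dist q z \<le> R"
    using \<open>bounded (\<Union>(fst ` K))\<close> bounded_any_center by metis
  show "\<exists>\<epsilon>>0. \<forall>\<omega>'\<in>Omega T. hdist \<omega>1 \<omega>' < ereal \<epsilon> \<longrightarrow> \<omega>' \<in> UU T w"
  proof (intro exI[of _ "exp (- R)"] conjI ballI impI)
    fix \<omega>2 assume \<omega>2: "\<omega>2 \<in> Omega T" "hdist \<omega>1 \<omega>2 < ereal (exp (- R))"
    obtain r where r: "r > R" "Mr r \<omega>1 = Mr r \<omega>2" using hdist_less_exp_imp[OF \<omega>2(2)] by blast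
    obtain S2 p2 where S2: "is_tiling S2" "p2 \<in> S2" "\<omega>2 = ptclass (S2,p2)" using Omega_E[OF \<omega>2(1)] by blast
    have "ptclass (Mr_patch r S1 p1, p1) = ptclass (Mr_patch r S2 p2, p2)"
      using r(2) Mr_ptclass[OF S1(1,2)] Mr_ptclass[OF S2(1,2)] S1(3) S2(3) by simp
    then obtain a where a: "Mr_patch r S2 p2 = pat_tr a (Mr_patch r S1 p1)" "p2 = tile_tr a p1"
      using ptclass_eq_iff mem_ptclass by metis
    have "K \<subseteq> Mr_patch r S1 p1" using Mr_patch_superset[OF S1(1) K(2) q R r(1)] .
    moreover have "Mr_patch r S2 p2 \<subseteq> S2" using S2(2) unfolding Mr_patch_def by blast
    ultimately have "pat_tr a K \<subseteq> S2" using a(1) pat_tr_mono by blast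
    moreover have "(pat_tr a K, p2, p2) \<in> w" using MII_pat_tr_mem[OF w K(1)] a(2) by blast
    ultimately have "occ w \<omega>2" using occ_ptclass_iff[OF w] S2(3) unfolding placed_def by blast
    then show "\<omega>2 \<in> UU T w" using \<omega>2(1) unfolding UU_def by blast
  qed simp
qed

lemma OmegaN_subset_Omega: "OmegaN T N \<subseteq> Omega T"
  unfolding OmegaN_def UU_def by blast

lemma Vgen_if_placed:
  assumes T: "is_tiling T" and lim: "approx_limit T v S x0 V" and vM: "\<And>n. v n \<in> MII T"
    and d: "d \<in> MII T" and c: "c \<in> MII T" and pd: "placed S x0 d E" and pc: "placed S x0 c E"
  shows "rcls T (MII T) (ptclass (S,x0)) d \<in> Vgen T c"
proof -
  have "rcls T (MII T) (ptclass (S,x0)) d = rcls T (MII T) (ptclass (S,x0)) c"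
    using rcls_approx_limit[OF T order_refl lim vM d pd] rcls_approx_limit[OF T order_refl lim vM c pc]
    by simp
  moreover have "occ (Lu T c) (ptclass (S,x0))" using occ_Lu_ptclass_iff[OF T c] pc by blast
  ultimately show ?thesis unfolding Vgen_def using approx_limit.in_Omega[OF lim] by blast
qed

lemma placed_if_Vgen:
  assumes T: "is_tiling T" and lim: "approx_limit T v S x0 V" and vM: "\<And>n. v n \<in> MII T"
    and d: "d \<in> MII T" and c: "c \<in> MII T" and pd: "placed S x0 d E"
    and V: "rcls T (MII T) (ptclass (S,x0)) d \<in> Vgen T c"
  shows "placed S x0 c E"
proof -
  obtain \<omega> where \<omega>: "rcls T (MII T) (ptclass (S,x0)) d = rcls T (MII T) \<omega> c" "\<omega> \<in> Omega T"
    "occ (Lu T c) \<omega>"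
    using V unfolding Vgen_def by blast
  obtain S2 p2 where S2: "\<omega> = ptclass (S2,p2)" using Omega_E[OF \<omega>(2)] by blast
  obtain e2 where "placed S2 p2 c e2" using \<omega>(3) occ_Lu_ptclass_iff[OF T c] S2 by auto
  then have "(\<omega>, c) \<in> rcls T (MII T) (ptclass (S,x0)) d" using rcls_refl[OF T order_refl c] S2 \<omega>(1) by simp
  then show ?thesis using rcls_approx_limit[OF T order_refl lim vM d pd] by simp
qed

section \<open>The homomorphism\<close>

locale almost_groupoid_map =
  fixes T :: "('n::finite,'l) tile set" and T' :: "('m::finite,'k) tile set"
    and N :: "('n,'l) dpat set set" and phihat :: "('n,'l) dpat set \<Rightarrow> ('m,'k) dpat set"
  assumes tiling: "is_tiling T" and tiling': "is_tiling T'"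
    and sub_almost_groupoid: "sub_almost_groupoid T N" and approximating: "approximating T N"
    and phihat_MII: "\<And>c. c \<in> N \<Longrightarrow> phihat c \<in> MII T'"
    and phihat_composable: "\<And>c c'. c \<in> N \<Longrightarrow> c' \<in> N \<Longrightarrow> composable T c c' \<Longrightarrow>
      composable T' (phihat c) (phihat c')"
    and phihat_dinv: "\<And>c. c \<in> N \<Longrightarrow> phihat (dinv c) = dinv (phihat c)"
    and phihat_dmult: "\<And>c c'. c \<in> N \<Longrightarrow> c' \<in> N \<Longrightarrow> composable T c c' \<Longrightarrow>
      dle (dmult T' (phihat c) (phihat c')) (phihat (dmult T c c'))"
    and phihat_rad: "\<exists>t>0. \<exists>B. \<forall>u\<in>N. is_unit T u \<longrightarrow> \<bar>rad (phihat u) - t * rad u\<bar> \<le> B"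
begin

lemma N_subset_MII: "N \<subseteq> MII T"
  using sub_almost_groupoid unfolding sub_almost_groupoid_def by blast

lemma N_MII: "c \<in> N \<Longrightarrow> c \<in> MII T"
  using N_subset_MII by blast

lemma dinv_in_N: "c \<in> N \<Longrightarrow> dinv c \<in> N"
  using sub_almost_groupoid unfolding sub_almost_groupoid_def by blast

lemma dmult_in_N: "c \<in> N \<Longrightarrow> c' \<in> N \<Longrightarrow> composable T c c' \<Longrightarrow> dmult T c c' \<in> N"
  using sub_almost_groupoid unfolding sub_almost_groupoid_def by blast

text \<open>A class equal to its inverse is a unit, since \<open>a + a = 0\<close> forces \<open>a = 0\<close>.\<close>

lemma phihat_unit:
  assumes u: "u \<in> N" "is_unit T u"
  shows "is_unit T' (phihat u)"
proof -
  obtain M x y where M: "phihat u = dpclass (M,x,y)" "translated_pattern T' M" "x \<in> M"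
    using MII_E[OF phihat_MII[OF u(1)]] by metis
  have "dpclass (M,y,x) = dpclass (M,x,y)" using phihat_dinv[OF u(1)] dinv_unit[OF u(2)] M(1) by simp
  then obtain a where a: "y = tile_tr a x" "x = tile_tr a y"
    using dpclass_eq_iff mem_dpclass by metis
  then have "tile_tr (a + a) x = x" by (metis tile_tr_add)
  then have "a + a = 0" using tile_tr_eq_self_imp_0 translated_pattern_proper_tile[OF tiling' M(2,3)] by blast
  then have "a = 0" by (metis scaleR_2 scaleR_eq_0_iff zero_neq_numeral)
  then show ?thesis using a M(1) phihat_MII[OF u(1)] is_unit_dpclass_iff[of M x y T'] by simp
qed

lemma phihat_unit_end: "u \<in> N \<Longrightarrow> is_unit T u \<Longrightarrow> placed S p (phihat u) E \<Longrightarrow> E = p"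
  using phihat_unit unit_mem_eq unfolding placed_def by metis

lemma iprod_in_N:
  assumes "approx_seq T N u"
  shows "iprod T u k \<in> N"
  using approx_seqD[OF assms] dmult_in_N by (induction k) auto

lemma iprod_phihat_dle:
  assumes u: "approx_seq T N u"
  shows "iprod T' (phihat \<circ> u) k \<in> MII T' \<and> dle (iprod T' (phihat \<circ> u) k) (phihat (iprod T u k))"
proof (induction k)
  case 0
  then show ?case using phihat_MII[OF approx_seqD(1)[OF u]] dle_refl[OF phihat_MII[OF approx_seqD(1)[OF u]]]
    by simp
next
  case (Suc k)
  let ?p = "iprod T' (phihat \<circ> u) k" and ?c = "phihat (iprod T u k)" and ?d = "phihat (u (Suc k))"
  note uD = approx_seqD[OF u]
  have c: "?c \<in> MII T'" "?d \<in> MII T'" using phihat_MII iprod_in_N[OF u] uD(1) by auto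
  have comp: "composable T' ?c ?d" using phihat_composable iprod_in_N[OF u] uD(1,3) by blast
  have mono: "composable T' ?p ?d \<and> dle (dmult T' ?p ?d) (dmult T' ?c ?d)"
    using dmult_dle_left_mono[OF tiling' _ c] Suc comp by blast
  have step: "iprod T' (phihat \<circ> u) (Suc k) = dmult T' ?p ?d" by (simp only: iprod.simps comp_apply)
  have p: "dmult T' ?p ?d \<in> MII T'"
    using dmult_MII[OF tiling' conjunct1[OF Suc] c(2) conjunct1[OF mono]] .
  have "dle (dmult T' ?c ?d) (phihat (iprod T u (Suc k)))"
    using phihat_dmult iprod_in_N[OF u] uD(1,3) by simp
  then show ?case
    unfolding step using p dle_trans[OF p dmult_MII[OF tiling' c comp] phihat_MII[OF iprod_in_N[OF u]]]
      conjunct2[OF mono] by blast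
qed

lemma approx_seq_phihat:
  assumes u: "approx_seq T N u"
  shows "approx_seq T' (MII T') (phihat \<circ> u)"
proof -
  note uD = approx_seqD[OF u]
  have "composable T' (iprod T' (phihat \<circ> u) k) ((phihat \<circ> u) (Suc k))" for k
  proof -
    have "composable T' (phihat (iprod T u k)) (phihat (u (Suc k)))"
      using phihat_composable iprod_in_N[OF u] uD(1,3) by blast
    then show ?thesis
      using dmult_dle_left_mono[OF tiling' conjunct1[OF iprod_phihat_dle[OF u]]
          phihat_MII[OF iprod_in_N[OF u]] phihat_MII[OF uD(1)] conjunct2[OF iprod_phihat_dle[OF u]]]
      by simp
  qed
  moreover obtain t B where tB: "t > 0" "\<forall>u\<in>N. is_unit T u \<longrightarrow> \<bar>rad (phihat u) - t * rad u\<bar> \<le> B"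
    using phihat_rad by blast
  have "filterlim (\<lambda>n. rad ((phihat \<circ> u) n)) at_top sequentially"
    unfolding filterlim_at_top
  proof
    fix Z
    have "\<forall>\<^sub>F n in sequentially. (Z + B) / t \<le> rad (u n)" using uD(4)[unfolded filterlim_at_top] by blast
    then show "\<forall>\<^sub>F n in sequentially. Z \<le> rad ((phihat \<circ> u) n)"
    proof (rule eventually_mono)
      fix n assume "(Z + B) / t \<le> rad (u n)"
      then have "Z + B \<le> t * rad (u n)" using tB(1) by (simp add: field_simps)
      moreover have "\<bar>rad (phihat (u n)) - t * rad (u n)\<bar> \<le> B" using tB uD(1,2) by blast
      ultimately show "Z \<le> rad ((phihat \<circ> u) n)" by simp
    qed
  qed
  ultimately show ?thesis unfolding approx_seq_def using phihat_MII phihat_unit uD(1,2) by simp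
qed


text \<open>Here \<open>f = w c\<close> satisfies \<open>f c\<inverse> = w\<close>, so \<open>phihat f \<cdot> (phihat c)\<inverse> \<preceq> phihat w\<close> puts a
  representative of \<open>phihat f\<close> inside the one of \<open>phihat w\<close>.\<close>

lemma phihat_dmult_rep_within:
  assumes w: "w \<in> N" and c: "c \<in> N" and Kw: "(Kw,p,p) \<in> w" and Kc: "(Kc,p,e) \<in> c" "Kc \<subseteq> Kw"
    and Pw: "(Pw,p',p') \<in> phihat w"
  shows "\<exists>Pf E. (Pf,p',E) \<in> phihat (dmult T w c) \<and> Pf \<subseteq> Pw"
proof -
  let ?f = "dmult T w c"
  have wM: "w \<in> MII T" and cM: "c \<in> MII T" using N_MII w c by auto
  have wc: "composable T w c" "?f = dpclass (Kw,p,e)"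
    using dmult_within[OF tiling wM cM Kw Kc] by auto
  have fN: "?f \<in> N" using dmult_in_N[OF w c wc(1)] .
  have fM: "?f \<in> MII T" using N_MII[OF fN] .
  have "(Kc,e,p) \<in> dinv c" using MII_eq_dpclass[OF cM Kc(1)] by simp
  moreover have "(Kw,p,e) \<in> ?f" using wc(2) by simp
  ultimately have "composable T ?f (dinv c) \<and> dmult T ?f (dinv c) = w"
    using dmult_within[OF tiling fM dinv_MII[OF cM] _ _ Kc(2)] MII_eq_dpclass[OF wM Kw] by simp
  then have comp: "composable T' (phihat ?f) (dinv (phihat c))"
    and le: "dle (dmult T' (phihat ?f) (dinv (phihat c))) (phihat w)"
    using phihat_composable[OF fN dinv_in_N[OF c]] phihat_dmult[OF fN dinv_in_N[OF c]] phihat_dinv[OF c]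
    by auto
  obtain F s E where F: "phihat ?f = dpclass (F,s,E)" using MII_E[OF phihat_MII[OF fN]] by metis
  obtain C sc ec where C: "phihat c = dpclass (C,sc,ec)" using MII_E[OF phihat_MII[OF c]] by metis
  have FM: "dpclass (F,s,E) \<in> MII T'" and CM: "dpclass (C,ec,sc) \<in> MII T'"
    using phihat_MII[OF fN] dinv_MII[OF phihat_MII[OF c]] F C by auto
  obtain b where b: "tile_tr b ec = E"
    using comp composable_dpclass_iff[OF tiling' FM CM] F C by auto
  have "dmult T' (phihat ?f) (dinv (phihat c)) = dpclass (F \<union> pat_tr b C, s, tile_tr b sc)"
    using dmult_dpclass[OF tiling' FM CM _ b] comp F C by simp
  moreover have "phihat w = dpclass (Pw,p',p')" using MII_eq_dpclass[OF phihat_MII[OF w] Pw] by blast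
  ultimately obtain a where a: "pat_tr a (F \<union> pat_tr b C) \<subseteq> Pw" "tile_tr a s = p'"
    using le dle_dpclass_iff by metis
  have "(pat_tr a F, p', tile_tr a E) \<in> phihat ?f" unfolding F mem_dpclass using a(2) by blast
  moreover have "pat_tr a F \<subseteq> Pw" using a(1) by (auto simp: pat_tr_Un)
  ultimately show ?thesis by blast
qed

text \<open>This is \<open>phihat w \<cdot> phihat c \<preceq> phihat (w c)\<close> read at the common first tile.\<close>

lemma phihat_placed_in_dmult_rep:
  assumes w: "w \<in> N" and c: "c \<in> N" and comp: "composable T w c"
    and Pw: "(Pw,p',p') \<in> phihat w" and Pf: "(Pf,p',E) \<in> phihat (dmult T w c)"
  shows "placed Pf p' (phihat c) E"
proof -
  have wM: "phihat w \<in> MII T'" and cM: "phihat c \<in> MII T'" using phihat_MII w c by auto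
  have comp': "composable T' (phihat w) (phihat c)" using phihat_composable[OF w c comp] .
  have wP: "phihat w = dpclass (Pw,p',p')" using MII_eq_dpclass[OF wM Pw] by blast
  obtain C sc ec where C: "phihat c = dpclass (C,sc,ec)" using MII_E[OF cM] by metis
  obtain b where b: "tile_tr b sc = p'"
    using composable_dpclass_iff[OF tiling'] wM cM comp' wP C by auto
  have "dmult T' (phihat w) (phihat c) = dpclass (Pw \<union> pat_tr b C, p', tile_tr b ec)"
    using dmult_dpclass[OF tiling' _ _ _ b] wM cM comp' wP C by simp
  moreover have "phihat (dmult T w c) = dpclass (Pf,p',E)"
    using MII_eq_dpclass[OF phihat_MII[OF dmult_in_N[OF w c comp]] Pf] by blast
  ultimately obtain a where a: "pat_tr a (Pw \<union> pat_tr b C) \<subseteq> Pf" "tile_tr a p' = p'"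
    "tile_tr a (tile_tr b ec) = E"
    using phihat_dmult[OF w c comp] dle_dpclass_iff by metis
  have "a = 0"
    using a(2) tile_tr_eq_self_imp_0 translated_pattern_proper_tile[OF tiling'] MII_eq_dpclass[OF wM Pw]
    by metis
  then have "pat_tr b C \<subseteq> Pf" "tile_tr b ec = E" using a by (auto simp: pat_tr_Un)
  moreover have "(pat_tr b C, p', tile_tr b ec) \<in> phihat c" unfolding C mem_dpclass using b by blast
  ultimately show ?thesis unfolding placed_def by blast
qed


lemma approx_seq_MII: "approx_seq T N u \<Longrightarrow> approx_seq T (MII T) u"
  using approx_seq_mono N_MII by blast

lemma approx_limits:
  assumes "approx_seq T N u"
  obtains S x0 V S' x0' W where "approx_limit T u S x0 V" "approx_limit T' (phihat \<circ> u) S' x0' W"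
  using approx_limit_exists[OF tiling approx_seq_MII[OF assms]]
    approx_limit_exists[OF tiling' approx_seq_phihat[OF assms]] by blast

text \<open>Both arrows are covered by a late unit \<open>w\<close> of \<open>u\<close>, with \<open>w c = w c2\<close>; hence their images
  are placed alike in one representative of \<open>phihat (w c)\<close>.\<close>

lemma phihat_placed_same_end:
  assumes u: "approx_seq T N u" and lim: "approx_limit T u S x0 V"
    and lim': "approx_limit T' (phihat \<circ> u) S' x0' W"
    and c: "c \<in> N" "c2 \<in> N" and pc: "placed S x0 c e" "placed S x0 c2 e"
  shows "\<exists>E. placed S' x0' (phihat c) E \<and> placed S' x0' (phihat c2) E"
proof -
  obtain K where K: "(K,x0,e) \<in> c" "K \<subseteq> S" using pc(1) placed_def by blast
  obtain K2 where K2: "(K2,x0,e) \<in> c2" "K2 \<subseteq> S" using pc(2) placed_def by blast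
  have "finite (K \<union> K2)" using MII_eq_dpclass[OF N_MII[OF c(1)] K(1)] MII_eq_dpclass[OF N_MII[OF c(2)] K2(1)]
    unfolding translated_pattern_def by blast
  then obtain n where n: "K \<union> K2 \<subseteq> V n"
    using eventually_happens'[OF sequentially_bot approx_limit.finite_subset_eventually[OF lim]] K K2
    by blast
  note uN = approx_seqD(1)[OF u, of n]
  have Vn: "(V n, x0, x0) \<in> u n" using approx_limit.rep[OF lim] .
  have Wn: "(W n, x0', x0') \<in> phihat (u n)" using approx_limit.rep[OF lim'] by simp
  have "composable T (u n) c \<and> dmult T (u n) c = dpclass (V n, x0, e)"
    "composable T (u n) c2 \<and> dmult T (u n) c2 = dpclass (V n, x0, e)"
    using dmult_within[OF tiling N_MII[OF uN] N_MII[OF c(1)] Vn K(1)]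
      dmult_within[OF tiling N_MII[OF uN] N_MII[OF c(2)] Vn K2(1)] n by auto
  moreover obtain Pf E where Pf: "(Pf,x0',E) \<in> phihat (dmult T (u n) c)" "Pf \<subseteq> W n"
    using phihat_dmult_rep_within[OF uN c(1) Vn K(1) _ Wn] n by blast
  ultimately have "placed Pf x0' (phihat c) E" "placed Pf x0' (phihat c2) E"
    using phihat_placed_in_dmult_rep[OF uN c(1) _ Wn] phihat_placed_in_dmult_rep[OF uN c(2) _ Wn] by auto
  then show ?thesis using Pf(2) approx_limit.rep_subset[OF lim'] placed_mono by (metis order_trans)
qed

lemma phihat_placed:
  assumes "approx_seq T N u" "approx_limit T u S x0 V" "approx_limit T' (phihat \<circ> u) S' x0' W"
    and "c \<in> N" "placed S x0 c e"
  shows "\<exists>E. placed S' x0' (phihat c) E"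
  using phihat_placed_same_end[OF assms(1-4,4,5,5)] by blast

lemma slim_phihat_eq:
  assumes u: "approx_seq T N u" and w: "approx_seq T N w" and eq: "slim u = slim w"
  shows "slim (phihat \<circ> u) = slim (phihat \<circ> w)"
proof -
  obtain S x0 V S' x0' W where lim: "approx_limit T u S x0 V" "approx_limit T' (phihat \<circ> u) S' x0' W"
    using approx_limits[OF u] by blast
  obtain S2 x2 V2 S2' x2' W2 where limw: "approx_limit T w S2 x2 V2"
    "approx_limit T' (phihat \<circ> w) S2' x2' W2"
    using approx_limits[OF w] by blast
  have "ptclass (S2,x2) = ptclass (S,x0)"
    using eq approx_limit.slim_eq[OF lim(1)] approx_limit.slim_eq[OF limw(1)] by simp
  then obtain a where a: "S2 = pat_tr a S" "x2 = tile_tr a x0" using ptclass_eq_iff mem_ptclass by metis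
  have "occ (phihat (w n)) (ptclass (S',x0'))" for n
  proof -
    note wN = approx_seqD(1)[OF w, of n]
    have "placed S2 x2 (w n) x2"
      using approx_limit.rep[OF limw(1)] approx_limit.rep_subset[OF limw(1)] unfolding placed_def by blast
    then have "placed S x0 (w n) x0" using placed_pat_tr_iff[OF N_MII[OF wN]] a by metis
    then obtain E where E: "placed S' x0' (phihat (w n)) E" using phihat_placed[OF u lim wN] by blast
    then have "E = x0'" using phihat_unit_end wN approx_seqD(2)[OF w] by blast
    then show ?thesis using E occ_ptclass_iff[OF phihat_MII[OF wN]] by simp
  qed
  moreover have "is_ptclass (ptclass (S',x0'))"
    using approx_limit.limit_tiling[OF lim(2)] approx_limit.base_tile[OF lim(2)] is_ptclass_def by blast
  ultimately have "ptclass (S',x0') = ptclass (S2',x2')" using approx_limit.unique[OF limw(2)] by simp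
  then show ?thesis using approx_limit.slim_eq[OF lim(2)] approx_limit.slim_eq[OF limw(2)] by simp
qed

lemma slim_phihat_act:
  assumes u: "approx_seq T N u" and lim: "approx_limit T u S x0 V"
    and lim': "approx_limit T' (phihat \<circ> u) S' x0' W"
    and c: "c \<in> N" and pc: "placed S x0 c e" and pE: "placed S' x0' (phihat c) E"
    and u2: "approx_seq T N u2" and s2: "slim u2 = ptclass (S,e)"
  shows "slim (phihat \<circ> u2) = ptclass (S',E)"
proof -
  obtain S2 x2 V2 S2' x2' W2 where lim2: "approx_limit T u2 S2 x2 V2"
    "approx_limit T' (phihat \<circ> u2) S2' x2' W2"
    using approx_limits[OF u2] by blast
  have "ptclass (S2,x2) = ptclass (S,e)" using s2 approx_limit.slim_eq[OF lim2(1)] by simp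
  then obtain a where a: "S2 = pat_tr a S" "x2 = tile_tr a e" using ptclass_eq_iff mem_ptclass by metis
  have cM: "c \<in> MII T" using N_MII c by blast
  have "occ (phihat (u2 k)) (ptclass (S',E))" for k
  proof -
    have kN: "u2 k \<in> N" using approx_seqD(1)[OF u2] .
    have kM: "u2 k \<in> MII T" using N_MII kN by blast
    have "placed S2 x2 (u2 k) x2"
      using approx_limit.rep[OF lim2(1)] approx_limit.rep_subset[OF lim2(1)] unfolding placed_def by blast
    then have pk: "placed S e (u2 k) e" using placed_pat_tr_iff[OF kM] a by metis
    have comp: "composable T c (u2 k)"
      using composable_if_placed_in_limit[OF tiling lim _ cM kM pc pk] N_MII approx_seqD(1)[OF u] by blast
    have gN: "dmult T c (u2 k) \<in> N" using dmult_in_N[OF c kN comp] .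
    have "placed S x0 (dmult T c (u2 k)) e" using placed_dmult[OF tiling cM kM comp pc pk] .
    then obtain X where X: "placed S' x0' (phihat (dmult T c (u2 k))) X"
      using phihat_placed[OF u lim lim' gN] by blast
    have comp': "composable T' (phihat c) (phihat (u2 k))" using phihat_composable[OF c kN comp] .
    have "dmult T' (phihat c) (phihat (u2 k)) \<in> MII T'"
      using dmult_MII[OF tiling' phihat_MII[OF c] phihat_MII[OF kN] comp'] .
    then have "placed S' x0' (dmult T' (phihat c) (phihat (u2 k))) X"
      using placed_if_dle[OF _ phihat_MII[OF gN] phihat_dmult[OF c kN comp] X] by blast
    then have "placed S' E (phihat (u2 k)) X"
      using placed_dmult_right[OF tiling' phihat_MII[OF c] phihat_MII[OF kN] comp' _ pE] by blast
    moreover then have "X = E" using phihat_unit_end kN approx_seqD(2)[OF u2] by blast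
    ultimately show ?thesis using occ_ptclass_iff[OF phihat_MII[OF kN]] by simp
  qed
  moreover have "is_ptclass (ptclass (S',E))"
    using approx_limit.limit_tiling[OF lim'] placed_in(2)[OF phihat_MII[OF c] pE] is_ptclass_def by blast
  ultimately have "ptclass (S',E) = ptclass (S2',x2')" using approx_limit.unique[OF lim2(2)] by simp
  then show ?thesis using approx_limit.slim_eq[OF lim2(2)] by simp
qed


lemma u_MII: "approx_seq T N u \<Longrightarrow> u n \<in> MII T"
  using approx_seqD(1) N_MII by blast

lemma phihat_u_MII: "approx_seq T N u \<Longrightarrow> (phihat \<circ> u) n \<in> MII T'"
  using phihat_MII[OF approx_seqD(1)] by simp

lemma rcls_phihat_eq:
  assumes u: "approx_seq T N u" and w: "approx_seq T N w" and c: "c \<in> N" and d: "d \<in> N"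
    and oc: "occ (Lu T c) (slim u)" and od: "occ (Lu T d) (slim w)"
    and eq: "rcls T N (slim u) c = rcls T N (slim w) d"
  shows "rcls T' (MII T') (slim (phihat \<circ> u)) (phihat c) = rcls T' (MII T') (slim (phihat \<circ> w)) (phihat d)"
proof -
  obtain S x0 V S' x0' W where lim: "approx_limit T u S x0 V" "approx_limit T' (phihat \<circ> u) S' x0' W"
    using approx_limits[OF u] by blast
  obtain S2 x2 V2 where limw: "approx_limit T w S2 x2 V2"
    using approx_limit_exists[OF tiling approx_seq_MII[OF w]] by blast
  note slim_u = approx_limit.slim_eq[OF lim(1)] and slim_w = approx_limit.slim_eq[OF limw]
  obtain e where e: "placed S x0 c e" using oc occ_Lu_ptclass_iff[OF tiling N_MII[OF c]] slim_u by auto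
  obtain ed where "placed S2 x2 d ed" using od occ_Lu_ptclass_iff[OF tiling N_MII[OF d]] slim_w by auto
  then have "(slim w, d) \<in> rcls T N (slim w) d"
    using rcls_refl[OF tiling N_subset_MII d] slim_w by simp
  then have "(slim w, d) \<in> rcls T N (slim u) c" using eq by simp
  then have sw: "slim w = slim u" and "(ptclass (S,x0), d) \<in> rcls T N (ptclass (S,x0)) c"
    using slim_u unfolding rcls_mem by auto
  then have "placed S x0 d e"
    using rcls_approx_limit[OF tiling N_subset_MII lim(1) u_MII[OF u] N_MII[OF c] e] by auto
  then obtain E where E: "placed S' x0' (phihat c) E" "placed S' x0' (phihat d) E"
    using phihat_placed_same_end[OF u lim c d e] by blast
  show ?thesis
    unfolding slim_phihat_eq[OF w u sw] approx_limit.slim_eq[OF lim(2)]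
    using rcls_approx_limit[OF tiling' order_refl lim(2) phihat_u_MII[OF u] phihat_MII[OF c] E(1)]
      rcls_approx_limit[OF tiling' order_refl lim(2) phihat_u_MII[OF u] phihat_MII[OF d] E(2)]
    by simp
qed

text \<open>\<open>\<phi>[lim u, c] = [lim (phihat \<circ> u), phihat c]\<close>; by \<open>rcls_phihat_eq\<close> the choice of \<open>u\<close>
  and \<open>c\<close> is immaterial.\<close>

definition phi :: "(('n,'l) ptil set \<times> ('n,'l) dpat set) set \<Rightarrow> (('m,'k) ptil set \<times> ('m,'k) dpat set) set"
  where "phi g = (SOME k. \<exists>u c. approx_seq T N u \<and> c \<in> N \<and> slim u \<in> OmegaN T N \<and>
      occ (Lu T c) (slim u) \<and> g = rcls T N (slim u) c \<and> k = rcls T' (MII T') (slim (phihat \<circ> u)) (phihat c))"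

lemma phi_rcls:
  assumes u: "approx_seq T N u" and c: "c \<in> N" and \<omega>: "slim u \<in> OmegaN T N"
    and oc: "occ (Lu T c) (slim u)"
  shows "phi (rcls T N (slim u) c) = rcls T' (MII T') (slim (phihat \<circ> u)) (phihat c)"
  unfolding phi_def
proof (rule someI2)
  show "\<exists>u' c'. approx_seq T N u' \<and> c' \<in> N \<and> slim u' \<in> OmegaN T N \<and> occ (Lu T c') (slim u') \<and>
      rcls T N (slim u) c = rcls T N (slim u') c' \<and>
      rcls T' (MII T') (slim (phihat \<circ> u)) (phihat c) = rcls T' (MII T') (slim (phihat \<circ> u')) (phihat c')"
    using assms by blast
next
  fix k assume "\<exists>u' c'. approx_seq T N u' \<and> c' \<in> N \<and> slim u' \<in> OmegaN T N \<and> occ (Lu T c') (slim u') \<and>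
      rcls T N (slim u) c = rcls T N (slim u') c' \<and> k = rcls T' (MII T') (slim (phihat \<circ> u')) (phihat c')"
  then show "k = rcls T' (MII T') (slim (phihat \<circ> u)) (phihat c)"
    using rcls_phihat_eq[OF u _ c _ oc] by metis
qed

lemma approx_seq_to:
  assumes "\<omega> \<in> OmegaN T N"
  obtains u where "approx_seq T N u" "slim u = \<omega>"
  using approximating assms unfolding approximating_def by blast

lemma phi_rcls_limit:
  assumes u: "approx_seq T N u" and lim: "approx_limit T u S x0 V"
    and lim': "approx_limit T' (phihat \<circ> u) S' x0' W"
    and c: "c \<in> N" and \<omega>: "slim u \<in> OmegaN T N" and oc: "occ (Lu T c) (slim u)"
  shows "phi (rcls T N (ptclass (S,x0)) c) = rcls T' (MII T') (ptclass (S',x0')) (phihat c)"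
    and "(ptclass (S',x0'), phihat c) \<in> Rdom T' (MII T') (Omega T')"
proof -
  show "phi (rcls T N (ptclass (S,x0)) c) = rcls T' (MII T') (ptclass (S',x0')) (phihat c)"
    using phi_rcls[OF u c \<omega> oc] approx_limit.slim_eq[OF lim] approx_limit.slim_eq[OF lim'] by simp
  obtain e where "placed S x0 c e"
    using oc occ_Lu_ptclass_iff[OF tiling N_MII[OF c]] approx_limit.slim_eq[OF lim] by auto
  then obtain E where "placed S' x0' (phihat c) E" using phihat_placed[OF u lim lim' c] by blast
  then show "(ptclass (S',x0'), phihat c) \<in> Rdom T' (MII T') (Omega T')"
    unfolding Rdom_def using occ_Lu_ptclass_iff[OF tiling' phihat_MII[OF c]] phihat_MII[OF c]
      approx_limit.in_Omega[OF lim'] by blast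
qed

lemma phi_rcls_approx:
  assumes u: "approx_seq T N u" and c: "c \<in> N" and \<omega>: "slim u \<in> OmegaN T N"
    and oc: "occ (Lu T c) (slim u)"
  shows "approx_seq T' (MII T') (phihat \<circ> u) \<and> slim (phihat \<circ> u) \<in> Omega T' \<and>
    occ (Lu T' (phihat c)) (slim (phihat \<circ> u)) \<and>
    phi (rcls T N (slim u) c) = rcls T' (MII T') (slim (phihat \<circ> u)) (phihat c)"
proof -
  obtain S x0 V S' x0' W where lim: "approx_limit T u S x0 V" "approx_limit T' (phihat \<circ> u) S' x0' W"
    using approx_limits[OF u] by blast
  have "(slim (phihat \<circ> u), phihat c) \<in> Rdom T' (MII T') (Omega T')"
    using phi_rcls_limit(2)[OF u lim c \<omega> oc] approx_limit.slim_eq[OF lim(2)] by simp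
  then show ?thesis using approx_seq_phihat[OF u] phi_rcls[OF u c \<omega> oc] unfolding Rdom_def by blast
qed

lemma phi_Rset:
  assumes g: "g \<in> Rset T N (OmegaN T N)"
  shows "phi g \<in> Rset T' (MII T') (Omega T')"
proof -
  obtain \<omega> c where \<omega>c: "(\<omega>,c) \<in> Rdom T N (OmegaN T N)" "g = rcls T N \<omega> c"
    using g unfolding Rset_def by auto
  then have h: "\<omega> \<in> OmegaN T N" "c \<in> N" "occ (Lu T c) \<omega>" unfolding Rdom_def by auto
  obtain u where u: "approx_seq T N u" "slim u = \<omega>" using approx_seq_to[OF h(1)] by blast
  then have "(slim (phihat \<circ> u), phihat c) \<in> Rdom T' (MII T') (Omega T')"
    using phi_rcls_approx[OF u(1) h(2)] h phihat_MII[OF h(2)] unfolding Rdom_def by auto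
  then show ?thesis unfolding Rset_def using phi_rcls[OF u(1) h(2)] u(2) h \<omega>c(2) by force
qed


lemma phi_rcls_act:
  assumes u: "approx_seq T N u" and lim: "approx_limit T u S x0 V"
    and lim': "approx_limit T' (phihat \<circ> u) S' x0' W"
    and c: "c \<in> N" and pc: "placed S x0 c e" and pE: "placed S' x0' (phihat c) E"
    and act: "(act (ptclass (S,x0)) c, c') \<in> Rdom T N (OmegaN T N)"
  shows "phi (rcls T N (act (ptclass (S,x0)) c) c') =
      rcls T' (MII T') (act (ptclass (S',x0')) (phihat c)) (phihat c')"
    and "(act (ptclass (S',x0')) (phihat c), phihat c') \<in> Rdom T' (MII T') (Omega T')"
proof -
  have h: "ptclass (S,e) \<in> OmegaN T N" "c' \<in> N" "occ (Lu T c') (ptclass (S,e))"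
    using act act_ptclass[OF tiling N_MII[OF c] pc] unfolding Rdom_def by auto
  obtain u2 where u2: "approx_seq T N u2" "slim u2 = ptclass (S,e)" using approx_seq_to[OF h(1)] by blast
  have "slim (phihat \<circ> u2) = act (ptclass (S',x0')) (phihat c)"
    using slim_phihat_act[OF u lim lim' c pc pE u2] act_ptclass[OF tiling' phihat_MII[OF c] pE] by simp
  then show "phi (rcls T N (act (ptclass (S,x0)) c) c') =
      rcls T' (MII T') (act (ptclass (S',x0')) (phihat c)) (phihat c')"
    and "(act (ptclass (S',x0')) (phihat c), phihat c') \<in> Rdom T' (MII T') (Omega T')"
    using phi_rcls_approx[OF u2(1) h(2)] u2(2) h act_ptclass[OF tiling N_MII[OF c] pc]
      phihat_MII[OF h(2)] unfolding Rdom_def by auto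
qed

lemma rcls_phihat_dmult:
  assumes u: "approx_seq T N u" and lim: "approx_limit T u S x0 V"
    and lim': "approx_limit T' (phihat \<circ> u) S' x0' W"
    and c: "c \<in> N" "c' \<in> N" and comp: "composable T c c'"
    and pc: "placed S x0 c e" "placed S e c' e'"
    and pE: "placed S' x0' (phihat c) E" "placed S' E (phihat c') E'"
  shows "rcls T' (MII T') (ptclass (S',x0')) (phihat (dmult T c c')) =
      rcls T' (MII T') (ptclass (S',x0')) (dmult T' (phihat c) (phihat c'))"
proof -
  have comp': "composable T' (phihat c) (phihat c')" using phihat_composable[OF c comp] .
  have cc'M: "dmult T' (phihat c) (phihat c') \<in> MII T'"
    using dmult_MII[OF tiling' phihat_MII[OF c(1)] phihat_MII[OF c(2)] comp'] .
  have cc'N: "dmult T c c' \<in> N" using dmult_in_N[OF c comp] .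
  have pp: "placed S' x0' (dmult T' (phihat c) (phihat c')) E'"
    using placed_dmult[OF tiling' phihat_MII[OF c(1)] phihat_MII[OF c(2)] comp' pE] .
  have "placed S x0 (dmult T c c') e'" using placed_dmult[OF tiling N_MII[OF c(1)] N_MII[OF c(2)] comp pc] .
  then obtain X where X: "placed S' x0' (phihat (dmult T c c')) X" using phihat_placed[OF u lim lim' cc'N] by blast
  then have "placed S' x0' (dmult T' (phihat c) (phihat c')) X"
    using placed_if_dle[OF cc'M phihat_MII[OF cc'N] phihat_dmult[OF c comp]] by blast
  then have "X = E'" using placed_end_unique[OF tiling' cc'M pp] by blast
  then show ?thesis
    using rcls_approx_limit[OF tiling' order_refl lim' phihat_u_MII[OF u] phihat_MII[OF cc'N] X]
      rcls_approx_limit[OF tiling' order_refl lim' phihat_u_MII[OF u] cc'M pp] by simp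
qed

lemma phi_hom:
  assumes "rcomp T N (OmegaN T N) g h"
  shows "rcomp T' (MII T') (Omega T') (phi g) (phi h) \<and>
    phi (rmult T N (OmegaN T N) g h) = rmult T' (MII T') (Omega T') (phi g) (phi h)"
proof -
  obtain \<omega> c c' where w: "(\<omega>,c) \<in> Rdom T N (OmegaN T N)" "(act \<omega> c, c') \<in> Rdom T N (OmegaN T N)"
    "composable T c c'" "g = rcls T N \<omega> c" "h = rcls T N (act \<omega> c) c'"
    using assms unfolding rcomp_def by blast
  have h1: "\<omega> \<in> OmegaN T N" "c \<in> N" "occ (Lu T c) \<omega>" and c': "c' \<in> N"
    using w(1,2) unfolding Rdom_def by auto
  obtain u where u: "approx_seq T N u" "slim u = \<omega>" using approx_seq_to[OF h1(1)] by blast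
  obtain S x0 V S' x0' W where lim: "approx_limit T u S x0 V" "approx_limit T' (phihat \<circ> u) S' x0' W"
    using approx_limits[OF u(1)] by blast
  have \<omega>: "\<omega> = ptclass (S,x0)" using u(2) approx_limit.slim_eq[OF lim(1)] by simp
  obtain e where e: "placed S x0 c e" using h1(3) occ_Lu_ptclass_iff[OF tiling N_MII[OF h1(2)]] \<omega> by auto
  have act: "act \<omega> c = ptclass (S,e)" using act_ptclass[OF tiling N_MII[OF h1(2)] e] \<omega> by simp
  obtain e' where e': "placed S e c' e'"
    using w(2) occ_Lu_ptclass_iff[OF tiling N_MII[OF c']] act unfolding Rdom_def by auto
  obtain E where E: "placed S' x0' (phihat c) E" using phihat_placed[OF u(1) lim h1(2) e] by blast
  note g = phi_rcls_limit[OF u(1) lim h1(2) h1(1)[folded u(2)] h1(3)[folded u(2)]]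
    and h = phi_rcls_act[OF u(1) lim h1(2) e E w(2)[unfolded \<omega>]]
  have "occ (Lu T' (phihat c')) (ptclass (S',E))"
    using h(2) act_ptclass[OF tiling' phihat_MII[OF h1(2)] E] unfolding Rdom_def by simp
  then obtain E' where E': "placed S' E (phihat c') E'"
    using occ_Lu_ptclass_iff[OF tiling' phihat_MII[OF c']] by blast
  have pg: "phi g = rcls T' (MII T') (ptclass (S',x0')) (phihat c)" using g(1) w(4) \<omega> by simp
  have ph: "phi h = rcls T' (MII T') (act (ptclass (S',x0')) (phihat c)) (phihat c')"
    using h(1) w(5) \<omega> by simp
  have comp': "composable T' (phihat c) (phihat c')" using phihat_composable[OF h1(2) c' w(3)] .
  have "rcomp T' (MII T') (Omega T') (phi g) (phi h)"
    unfolding rcomp_def using g(2) h(2) comp' pg ph by blast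
  moreover have "rmult T N (OmegaN T N) g h = rcls T N (ptclass (S,x0)) (dmult T c c')"
    using rmult_rcls[OF tiling N_subset_MII OmegaN_subset_Omega lim(1) u_MII[OF u(1)]
        w(1,2)[unfolded \<omega>] w(3)] w(4,5) \<omega> by simp
  moreover have "occ (Lu T (dmult T c c')) (ptclass (S,x0))"
    using occ_Lu_ptclass_iff[OF tiling N_MII[OF dmult_in_N[OF h1(2) c' w(3)]]]
      placed_dmult[OF tiling N_MII[OF h1(2)] N_MII[OF c'] w(3) e e'] by blast
  then have "phi (rcls T N (ptclass (S,x0)) (dmult T c c')) =
      rcls T' (MII T') (ptclass (S',x0')) (phihat (dmult T c c'))"
    using phi_rcls_limit(1)[OF u(1) lim dmult_in_N[OF h1(2) c' w(3)]] u(2) h1(1) \<omega> by simp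
  moreover have "\<dots> = rcls T' (MII T') (ptclass (S',x0')) (dmult T' (phihat c) (phihat c'))"
    using rcls_phihat_dmult[OF u(1) lim h1(2) c' w(3) e e' E E'] .
  moreover have "\<dots> = rmult T' (MII T') (Omega T') (phi g) (phi h)"
    using rmult_rcls[OF tiling' order_refl order_refl lim(2) phihat_u_MII[OF u(1)] g(2) h(2) comp'] pg ph
    by simp
  ultimately show ?thesis by simp
qed


lemma phihat_unit_rep_at_limit:
  assumes u: "approx_seq T N u" and lim: "approx_limit T u S x0 V"
    and lim': "approx_limit T' (phihat \<circ> u) S' x0' W"
    and w: "w \<in> N" "is_unit T w" and occ: "occ w (ptclass (S,x0))"
  shows "\<exists>P. (P,x0',x0') \<in> phihat w \<and> P \<subseteq> S'"
proof -
  have "placed S x0 w x0" using occ occ_ptclass_iff[OF N_MII[OF w(1)]] by blast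
  then obtain E where "placed S' x0' (phihat w) E" using phihat_placed[OF u lim lim' w(1)] by blast
  moreover then have "E = x0'" using phihat_unit_end[OF w] by blast
  ultimately show ?thesis unfolding placed_def by blast
qed

text \<open>The representative of \<open>phihat w\<close> reappears, translated, at every point where \<open>w\<close> occurs,
  and carries the placements of \<open>phihat c\<close> and \<open>c'\<close> along.\<close>

lemma phi_in_Vgen_if_unit_occurs:
  assumes w: "w \<in> N" "is_unit T w" and P: "(P,p',p') \<in> phihat w"
    and c: "c \<in> N" and c': "c' \<in> MII T'"
    and pc: "placed P p' (phihat c) E" and pc': "placed P p' c' E"
    and \<omega>: "(\<omega>,c) \<in> Rdom T N (OmegaN T N)" and occ: "occ w \<omega>"
  shows "phi (rcls T N \<omega> c) \<in> Vgen T' c'"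
proof -
  have h: "\<omega> \<in> OmegaN T N" "occ (Lu T c) \<omega>" using \<omega> unfolding Rdom_def by auto
  obtain u where u: "approx_seq T N u" "slim u = \<omega>" using approx_seq_to[OF h(1)] by blast
  obtain S x0 V S' x0' W where lim: "approx_limit T u S x0 V" "approx_limit T' (phihat \<circ> u) S' x0' W"
    using approx_limits[OF u(1)] by blast
  have \<omega>_eq: "\<omega> = ptclass (S,x0)" using u(2) approx_limit.slim_eq[OF lim(1)] by simp
  obtain Q where Q: "(Q,x0',x0') \<in> phihat w" "Q \<subseteq> S'"
    using phihat_unit_rep_at_limit[OF u(1) lim w] occ \<omega>_eq by blast
  obtain a where a: "Q = pat_tr a P" "x0' = tile_tr a p'"
    using Q(1) MII_eq_dpclass[OF phihat_MII[OF w(1)] P] mem_dpclass by metis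
  have "placed S' x0' (phihat c) (tile_tr a E)" "placed S' x0' c' (tile_tr a E)"
    using placed_pat_tr[OF phihat_MII[OF c] pc] placed_pat_tr[OF c' pc'] a Q(2) placed_mono by metis+
  then have "rcls T' (MII T') (ptclass (S',x0')) (phihat c) \<in> Vgen T' c'"
    using Vgen_if_placed[OF tiling' lim(2) phihat_u_MII[OF u(1)] phihat_MII[OF c] c'] by blast
  then show ?thesis using phi_rcls_limit(1)[OF u(1) lim c] u(2) h \<omega>_eq by simp
qed

lemma phi_Vgen_nbhd:
  assumes c': "c' \<in> MII T'" and \<omega>: "(\<omega>,c) \<in> Rdom T N (OmegaN T N)"
    and V: "phi (rcls T N \<omega> c) \<in> Vgen T' c'"
  shows "\<exists>w\<in>N. occ w \<omega> \<and> (\<forall>\<omega>1\<in>UU T w. (\<omega>1,c) \<in> Rdom T N (OmegaN T N) \<longrightarrow>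
      phi (rcls T N \<omega>1 c) \<in> Vgen T' c')"
proof -
  have h: "\<omega> \<in> OmegaN T N" "c \<in> N" "occ (Lu T c) \<omega>" using \<omega> unfolding Rdom_def by auto
  obtain u where u: "approx_seq T N u" "slim u = \<omega>" using approx_seq_to[OF h(1)] by blast
  obtain S x0 V S' x0' W where lim: "approx_limit T u S x0 V" "approx_limit T' (phihat \<circ> u) S' x0' W"
    using approx_limits[OF u(1)] by blast
  have \<omega>_eq: "\<omega> = ptclass (S,x0)" using u(2) approx_limit.slim_eq[OF lim(1)] by simp
  obtain e where "placed S x0 c e" using h(3) occ_Lu_ptclass_iff[OF tiling N_MII[OF h(2)]] \<omega>_eq by auto
  then obtain E where E: "placed S' x0' (phihat c) E" using phihat_placed[OF u(1) lim h(2)] by blast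
  have "rcls T' (MII T') (ptclass (S',x0')) (phihat c) \<in> Vgen T' c'"
    using V phi_rcls_limit(1)[OF u(1) lim h(2)] u(2) h \<omega>_eq by simp
  then have E': "placed S' x0' c' E"
    using placed_if_Vgen[OF tiling' lim(2) phihat_u_MII[OF u(1)] phihat_MII[OF h(2)] c' E] by blast
  obtain K K' where K: "(K,x0',E) \<in> phihat c" "K \<subseteq> S'" "(K',x0',E) \<in> c'" "K' \<subseteq> S'"
    using E E' unfolding placed_def by blast
  have "finite (K \<union> K')"
    using MII_eq_dpclass[OF phihat_MII[OF h(2)] K(1)] MII_eq_dpclass[OF c' K(3)]
    unfolding translated_pattern_def by blast
  then obtain n where n: "K \<union> K' \<subseteq> W n"
    using eventually_happens'[OF sequentially_bot approx_limit.finite_subset_eventually[OF lim(2)]] K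
    by blast
  have Wn: "placed (W n) x0' (phihat c) E" "placed (W n) x0' c' E" using K n unfolding placed_def by blast+
  have rep: "(W n, x0', x0') \<in> phihat (u n)" using approx_limit.rep[OF lim(2)] by simp
  have "phi (rcls T N \<omega>1 c) \<in> Vgen T' c'"
    if "(\<omega>1,c) \<in> Rdom T N (OmegaN T N)" "occ (u n) \<omega>1" for \<omega>1
    using phi_in_Vgen_if_unit_occurs[OF approx_seqD(1,2)[OF u(1)] rep h(2) c' Wn that] .
  moreover have "occ (u n) \<omega>"
    using occ_ptclass_iff[OF u_MII[OF u(1)]] approx_limit.rep[OF lim(1)]
      approx_limit.rep_subset[OF lim(1)] \<omega>_eq unfolding placed_def by blast
  ultimately show ?thesis using approx_seqD(1)[OF u(1)] unfolding UU_def by blast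
qed

lemma phi_continuous:
  assumes c': "c' \<in> MII T'"
  shows "RN_open T N {g \<in> Rset T N (OmegaN T N). phi g \<in> Vgen T' c'}"
  unfolding RN_open_def dom_open_def
proof (intro conjI ballI, blast, blast)
  fix p assume "p \<in> {p \<in> Rdom T N (OmegaN T N). rcls T N (fst p) (snd p) \<in>
      {g \<in> Rset T N (OmegaN T N). phi g \<in> Vgen T' c'}}"
  then obtain \<omega> c where p: "p = (\<omega>,c)" "(\<omega>,c) \<in> Rdom T N (OmegaN T N)" "phi (rcls T N \<omega> c) \<in> Vgen T' c'"
    by (cases p) auto
  then obtain w where w: "w \<in> N" "occ w \<omega>"
    "\<forall>\<omega>1\<in>UU T w. (\<omega>1,c) \<in> Rdom T N (OmegaN T N) \<longrightarrow> phi (rcls T N \<omega>1 c) \<in> Vgen T' c'"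
    using phi_Vgen_nbhd[OF c'] by blast
  have "\<omega> \<in> UU T w" using w(2) p(2) OmegaN_subset_Omega unfolding UU_def Rdom_def by auto
  moreover have "rcls T N \<omega>1 c \<in> Rset T N (OmegaN T N)" if "(\<omega>1,c) \<in> Rdom T N (OmegaN T N)" for \<omega>1
    using that unfolding Rset_def by force
  ultimately show "case p of (\<omega>, c) \<Rightarrow> \<exists>S. Omega_open T S \<and> \<omega> \<in> S \<and>
      (\<forall>\<omega>'\<in>S. (\<omega>', c) \<in> Rdom T N (OmegaN T N) \<longrightarrow> (\<omega>', c) \<in> {p \<in> Rdom T N (OmegaN T N).
        rcls T N (fst p) (snd p) \<in> {g \<in> Rset T N (OmegaN T N). phi g \<in> Vgen T' c'}})"
    using Omega_open_UU[OF tiling N_MII[OF w(1)]] w(3) p(1) by auto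
qed

end

theorem mainTheorem8:
  fixes T :: "('n::finite,'l) tile set" and T' :: "('m::finite,'k) tile set"
    and N :: "('n,'l) dpat set set"
    and phihat :: "('n,'l) dpat set \<Rightarrow> ('m,'k) dpat set"
  assumes "is_tiling T" and "is_tiling T'"
    and "sub_almost_groupoid T N" and "approximating T N"
    and "\<forall>c\<in>N. phihat c \<in> MII T'"
    and "\<forall>c\<in>N. \<forall>c'\<in>N. composable T c c' \<longrightarrow> composable T' (phihat c) (phihat c')"
    and "\<forall>c\<in>N. phihat (dinv c) = dinv (phihat c)"
    and "\<forall>c\<in>N. \<forall>c'\<in>N. composable T c c' \<longrightarrow>
           dle (dmult T' (phihat c) (phihat c')) (phihat (dmult T c c'))"
    and "\<exists>t>0. \<exists>B. \<forall>u\<in>N. is_unit T u \<longrightarrow> \<bar>rad (phihat u) - t * rad u\<bar> \<le> B"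
  shows "\<exists>\<phi>.
     (\<forall>u c. approx_seq T N u \<and> c \<in> N \<and> slim u \<in> OmegaN T N \<and> occ (Lu T c) (slim u) \<longrightarrow>
        approx_seq T' (MII T') (phihat \<circ> u) \<and> slim (phihat \<circ> u) \<in> Omega T' \<and>
        occ (Lu T' (phihat c)) (slim (phihat \<circ> u)) \<and>
        \<phi> (rcls T N (slim u) c) = rcls T' (MII T') (slim (phihat \<circ> u)) (phihat c)) \<and>
     (\<forall>g\<in>Rset T N (OmegaN T N). \<phi> g \<in> Rset T' (MII T') (Omega T')) \<and>
     (\<forall>g\<in>Rset T N (OmegaN T N). \<forall>h\<in>Rset T N (OmegaN T N). rcomp T N (OmegaN T N) g h \<longrightarrow>
        rcomp T' (MII T') (Omega T') (\<phi> g) (\<phi> h) \<and>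
        \<phi> (rmult T N (OmegaN T N) g h) = rmult T' (MII T') (Omega T') (\<phi> g) (\<phi> h)) \<and>
     (\<forall>c'\<in>MII T'. RN_open T N {g\<in>Rset T N (OmegaN T N). \<phi> g \<in> Vgen T' c'})"
proof -
  interpret almost_groupoid_map T T' N phihat
    using assms by unfold_locales blast+
  show ?thesis
    using phi_rcls_approx phi_Rset phi_hom phi_continuous by (intro exI[of _ phi] conjI) blast+
qed

end
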